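(* Let $S$ be a closed oriented surface of genus at least two, let $f\in\mathrm{Diff}_0(S)$, and let $x$ be an accumulation point of $\mathrm{Fix}(f)$. Fix local coordinates around $x$, let $U_\epsilon(x)$ be the open $\epsilon$-neighborhood of $x$ in these coordinates, and for points $p,q$ in the chart let $\alpha_{p,q}$ denote the straight line segment from $p$ to $q$. Then for all sufficiently small $\epsilon>0$: (1) if $y\in\mathrm{Fix}(f)\cap U_\epsilon(x)$ then $f(\alpha_{x,y})\subset U_\epsilon(x)$; (2) there is a neighborhood $W$ of $f$ in $\mathrm{Diff}_0(S)$ such that if $g\in W$, $p\notin\mathrm{Fix}(g)$ and $p,g(p)\in U_\epsilon(x)$, then $\alpha_{p,g(p)}\cap\mathrm{Fix}(g)=\emptyset$. In particular, for all $y\in\mathrm{Fix}(f)\cap U_\epsilon(x)$ the straight line homotopy between $\alpha_{x,y}$ and $f(\alpha_{x,y})$ is a homotopy rel $\mathrm{Fix}(f)$.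
   Context: $\mathrm{Diff}_0(S)$ is the group of $C^1$ diffeomorphisms of $S$ isotopic to the identity (with its $C^1$ topology). A homotopy $\alpha_t$ between paths with common endpoints is rel a closed set $K$ if endpoints stay fixed and whenever $\alpha_{t_0}(s)\in K$ one has $\alpha_t(s)=\alpha_{t_0}(s)$ for all $t$. *)

theory Defs
  imports "HOL-Analysis.Analysis" "HOL-Homology.Homology" "HOL-Algebra.Free_Abelian_Groups"
begin

type_synonym R2 = "real ^ 2"
type_synonym 'a chartT = "'a set \<times> ('a \<Rightarrow> R2)"

definition C1_on :: "R2 set \<Rightarrow> (R2 \<Rightarrow> R2) \<Rightarrow> bool" where
  "C1_on X h \<longleftrightarrow> (\<exists>D :: R2 \<Rightarrow> (R2 \<Rightarrow>\<^sub>L R2).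
      (\<forall>z\<in>X. (h has_derivative blinfun_apply (D z)) (at z)) \<and> continuous_on X D)"

definition is_chart :: "'a::topological_space set \<Rightarrow> ('a \<Rightarrow> R2) \<Rightarrow> bool" where
  "is_chart U \<phi> \<longleftrightarrow> open U \<and> open (\<phi> ` U) \<and> (\<exists>\<psi>. homeomorphism U (\<phi> ` U) \<phi> \<psi>)"

definition transition :: "'a chartT \<Rightarrow> 'a chartT \<Rightarrow> R2 \<Rightarrow> R2" where
  "transition c d = snd d \<circ> inv_into (fst c) (snd c)"

definition overlap_dom :: "'a chartT \<Rightarrow> 'a chartT \<Rightarrow> R2 set" where
  "overlap_dom c d = snd c ` (fst c \<inter> fst d)"

definition oriented_C1_atlas :: "'a::topological_space chartT set \<Rightarrow> bool" where
  "oriented_C1_atlas A \<longleftrightarrow>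
     (\<forall>c\<in>A. is_chart (fst c) (snd c)) \<and> (\<Union>(fst ` A) = UNIV) \<and>
     (\<forall>c\<in>A. \<forall>d\<in>A. C1_on (overlap_dom c d) (transition c d) \<and>
        (\<forall>z\<in>overlap_dom c d. det (matrix (frechet_derivative (transition c d) (at z))) > 0))"

definition compatible_chart :: "'a::topological_space chartT set \<Rightarrow> 'a chartT \<Rightarrow> bool" where
  "compatible_chart A c \<longleftrightarrow> is_chart (fst c) (snd c) \<and>
     (\<forall>d\<in>A. C1_on (overlap_dom c d) (transition c d) \<and> C1_on (overlap_dom d c) (transition d c))"

definition local_rep :: "'a chartT \<Rightarrow> 'a chartT \<Rightarrow> ('a \<Rightarrow> 'a) \<Rightarrow> R2 \<Rightarrow> R2" where
  "local_rep c d f = snd d \<circ> f \<circ> inv_into (fst c) (snd c)"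

definition C1_map :: "'a::topological_space chartT set \<Rightarrow> ('a \<Rightarrow> 'a) \<Rightarrow> bool" where
  "C1_map A f \<longleftrightarrow> continuous_on UNIV f \<and>
     (\<forall>c\<in>A. \<forall>d\<in>A. C1_on (snd c ` (fst c \<inter> f -` fst d)) (local_rep c d f))"

definition C1_diffeo :: "'a::topological_space chartT set \<Rightarrow> ('a \<Rightarrow> 'a) \<Rightarrow> bool" where
  "C1_diffeo A f \<longleftrightarrow> bij f \<and> C1_map A f \<and> C1_map A (inv_into UNIV f)"

(* Data for a subbasic C^1 neighbourhood (weak = strong C^1 topology, S compact):
   charts c,d in the atlas and a compact K inside the domain of c with f(K) inside d *)
definition C1_nbhd_data :: "'a::topological_space chartT set \<Rightarrow> ('a \<Rightarrow> 'a)
     \<Rightarrow> ('a chartT \<times> 'a chartT \<times> 'a set) set \<Rightarrow> real \<Rightarrow> bool" where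
  "C1_nbhd_data A f F \<epsilon> \<longleftrightarrow> finite F \<and> \<epsilon> > 0 \<and>
     (\<forall>(c, d, K)\<in>F. c \<in> A \<and> d \<in> A \<and> compact K \<and> K \<subseteq> fst c \<and> f ` K \<subseteq> fst d)"

definition C1_basic_nbhd :: "'a::topological_space chartT set \<Rightarrow> ('a \<Rightarrow> 'a)
     \<Rightarrow> ('a chartT \<times> 'a chartT \<times> 'a set) set \<Rightarrow> real \<Rightarrow> ('a \<Rightarrow> 'a) set" where
  "C1_basic_nbhd A f F \<epsilon> = {g. C1_diffeo A g \<and>
     (\<forall>(c, d, K)\<in>F. g ` K \<subseteq> fst d \<and>
        (\<forall>z\<in>snd c ` K.
           norm (local_rep c d g z - local_rep c d f z) < \<epsilon> \<and>
           onorm (\<lambda>v. frechet_derivative (local_rep c d g) (at z) v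
                     - frechet_derivative (local_rep c d f) (at z) v) < \<epsilon>))}"

definition Diff0 :: "'a::topological_space chartT set \<Rightarrow> ('a \<Rightarrow> 'a) set" where
  "Diff0 A = {f. C1_diffeo A f \<and>
     (\<exists>H :: real \<Rightarrow> 'a \<Rightarrow> 'a. H 0 = id \<and> H 1 = f \<and> (\<forall>t\<in>{0..1}. C1_diffeo A (H t)) \<and>
        (\<forall>t\<in>{0..1}. \<forall>F \<epsilon>. C1_nbhd_data A (H t) F \<epsilon> \<longrightarrow>
            (\<exists>\<delta>>0. \<forall>s\<in>{0..1}. \<bar>s - t\<bar> < \<delta> \<longrightarrow> H s \<in> C1_basic_nbhd A (H t) F \<epsilon>)))}"

definition C1_nbhd_in_Diff0 :: "'a::topological_space chartT set \<Rightarrow> ('a \<Rightarrow> 'a) \<Rightarrow> ('a \<Rightarrow> 'a) set \<Rightarrow> bool" where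
  "C1_nbhd_in_Diff0 A f W \<longleftrightarrow> W \<subseteq> Diff0 A \<and>
     (\<exists>F \<epsilon>. C1_nbhd_data A f F \<epsilon> \<and> C1_basic_nbhd A f F \<epsilon> \<inter> Diff0 A \<subseteq> W)"

(* closed oriented surface of genus g (g read off from H_1 = Z^(2g)) *)
definition closed_oriented_surface_genus :: "'a::t2_space chartT set \<Rightarrow> nat \<Rightarrow> bool" where
  "closed_oriented_surface_genus A g \<longleftrightarrow>
     compact (UNIV :: 'a set) \<and> connected (UNIV :: 'a set) \<and> oriented_C1_atlas A \<and>
     homology_group 1 (euclidean :: 'a topology) \<cong> free_Abelian_group {..<2 * g}"

definition Fix :: "('a \<Rightarrow> 'a) \<Rightarrow> 'a set" where
  "Fix f = {z. f z = z}"

definition chart_ball :: "'a chartT \<Rightarrow> 'a \<Rightarrow> real \<Rightarrow> 'a set" where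
  "chart_ball c x \<epsilon> = inv_into (fst c) (snd c) ` (ball (snd c x) \<epsilon> \<inter> snd c ` fst c)"

definition seg_path :: "'a chartT \<Rightarrow> 'a \<Rightarrow> 'a \<Rightarrow> real \<Rightarrow> 'a" where
  "seg_path c p q s = inv_into (fst c) (snd c) ((1 - s) *\<^sub>R snd c p + s *\<^sub>R snd c q)"

definition seg :: "'a chartT \<Rightarrow> 'a \<Rightarrow> 'a \<Rightarrow> 'a set" where
  "seg c p q = seg_path c p q ` {0..1}"

definition straight_homotopy :: "'a chartT \<Rightarrow> (real \<Rightarrow> 'a) \<Rightarrow> (real \<Rightarrow> 'a) \<Rightarrow> real \<Rightarrow> real \<Rightarrow> 'a" where
  "straight_homotopy c \<gamma>0 \<gamma>1 t s =
     inv_into (fst c) (snd c) ((1 - t) *\<^sub>R snd c (\<gamma>0 s) + t *\<^sub>R snd c (\<gamma>1 s))"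

definition homotopy_rel :: "'a::topological_space set \<Rightarrow> (real \<Rightarrow> 'a) \<Rightarrow> (real \<Rightarrow> 'a)
     \<Rightarrow> (real \<Rightarrow> real \<Rightarrow> 'a) \<Rightarrow> bool" where
  "homotopy_rel K \<gamma>0 \<gamma>1 H \<longleftrightarrow>
     continuous_on ({0..1} \<times> {0..1}) (\<lambda>(t, s). H t s) \<and>
     (\<forall>s\<in>{0..1}. H 0 s = \<gamma>0 s \<and> H 1 s = \<gamma>1 s) \<and>
     (\<forall>t\<in>{0..1}. H t 0 = \<gamma>0 0 \<and> H t 1 = \<gamma>0 1) \<and>
     (\<forall>t0\<in>{0..1}. \<forall>s\<in>{0..1}. H t0 s \<in> K \<longrightarrow> (\<forall>t\<in>{0..1}. H t s = H t0 s))"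

end

(* Write F for f read in the chart, a = phi x and A = DF(a). Since x is an accumulation point
   of Fix(f), 1 is an eigenvalue of A; since f is joined to the identity by C^1 diffeomorphisms,
   the Jacobian of f cannot change sign along the isotopy, so det A > 0. For 2x2 matrices these
   two facts give det((1 - s) I + s A) = 1 - s + s det A > 0, so the maps (1 - s) I + s A,
   0 <= s <= 1, are uniformly invertible. For g C^1-close to f the derivative of the local
   representative G of g stays close to A on a small ball, and the mean value inequality for
   G - A shows that a point of the segment from p to g(p) is fixed by g only if p is, and that F
   maps the segment from a to a fixed point b into the ball of radius |b - a| about a. The
   straight line homotopy from alpha_{x,y} to f(alpha_{x,y}) moves every point along the
   segment to its image, hence it is stationary wherever it meets Fix(f). *)

theory Submission
  imports Defs
begin

section \<open>Linear algebra\<close>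

lemma det_convex_combination_id:
  fixes f :: "real^2 \<Rightarrow> real^2"
  assumes "det (matrix (\<lambda>w. f w - w)) = 0"
  shows "det (matrix (\<lambda>w. (1 - s) *\<^sub>R w + s *\<^sub>R f w)) = (1 - s) + s * det (matrix f)"
proof -
  have "(1 - s + s * a) * (1 - s + s * d) - s * c * (s * b) = 1 - s + s * (a * d - c * b)"
    if "(a - 1) * (d - 1) = c * b" for a b c d :: real
  proof -
    have "s * c * (s * b) = s * s * ((a - 1) * (d - 1))" unfolding that by simp
    then show ?thesis unfolding that[symmetric] by (simp add: algebra_simps)
  qed
  then show ?thesis using assms unfolding det_2 matrix_def by (simp add: axis_def)
qed

lemma compact_family_uniformly_bounded_below:
  fixes L :: "'s::topological_space \<Rightarrow> 'a::euclidean_space \<Rightarrow> 'b::real_normed_vector"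
  assumes "compact S"
    and cont: "continuous_on (S \<times> sphere 0 1) (\<lambda>(s, w). L s w)"
    and lin: "\<And>s. s \<in> S \<Longrightarrow> linear (L s)" and inj: "\<And>s. s \<in> S \<Longrightarrow> inj (L s)"
  shows "\<exists>c>0. \<forall>s\<in>S. \<forall>w. c * norm w \<le> norm (L s w)"
proof (cases "S = {}")
  case False
  have "compact (S \<times> sphere (0::'a) 1)" "S \<times> sphere (0::'a) 1 \<noteq> {}"
    using False \<open>compact S\<close> by (simp_all add: compact_Times)
  moreover have "continuous_on (S \<times> sphere 0 1) (\<lambda>u. norm (L (fst u) (snd u)))"
    using continuous_on_norm[OF cont] by (simp add: case_prod_beta)
  ultimately obtain m where m: "m \<in> S \<times> sphere 0 1"
    and min: "\<forall>u\<in>S \<times> sphere 0 1. norm (L (fst m) (snd m)) \<le> norm (L (fst u) (snd u))"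
    using continuous_attains_inf by blast
  have pos: "0 < norm (L (fst m) (snd m))"
  proof -
    have "fst m \<in> S" "snd m \<noteq> 0" using m by auto
    then show ?thesis using inj[of "fst m"] linear_0[OF lin[of "fst m"]] by (metis injD zero_less_norm_iff)
  qed
  have "norm (L (fst m) (snd m)) * norm w \<le> norm (L s w)" if "s \<in> S" for s w
  proof (cases "w = 0")
    case False
    have "norm (L (fst m) (snd m)) \<le> norm (L s (w /\<^sub>R norm w))"
      using min that False by auto
    also have "\<dots> = norm (L s w) / norm w"
      using linear_scale[OF lin[OF that]] by (simp add: divide_inverse_commute)
    finally show ?thesis using False by (simp add: field_simps)
  qed (use lin[OF that] linear_0 in auto)
  with pos show ?thesis by blast
qed (auto intro: exI[of _ 1])

lemma segment_from_id_uniformly_bounded_below: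
  fixes L :: "(real^2) \<Rightarrow>\<^sub>L (real^2)"
  assumes "det (matrix (blinfun_apply L)) > 0" and "det (matrix (\<lambda>w. L w - w)) = 0"
  shows "\<exists>c>0. \<forall>s\<in>{0..1}. \<forall>w. c * norm w \<le> norm ((1 - s) *\<^sub>R w + s *\<^sub>R L w)"
proof (rule compact_family_uniformly_bounded_below)
  show "continuous_on ({0..1} \<times> sphere 0 1) (\<lambda>(s, w). (1 - s) *\<^sub>R w + s *\<^sub>R L w)"
    by (simp add: case_prod_beta) (intro continuous_intros)
  fix s :: real assume s: "s \<in> {0..1}"
  show lin: "linear (\<lambda>w. (1 - s) *\<^sub>R w + s *\<^sub>R L w)"
    by (simp add: linear_iff blinfun.add_right blinfun.scaleR_right algebra_simps)
  have "0 < (1 - s) + s * det (matrix (blinfun_apply L))"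
    using s assms(1) by (cases "s = 0") (auto intro: add_nonneg_pos)
  then show "inj (\<lambda>w. (1 - s) *\<^sub>R w + s *\<^sub>R L w)"
    using det_convex_combination_id[OF assms(2), of s] det_nz_iff_inj[OF lin] by simp
qed simp

lemma det_sign_locally_constant:
  fixes L0 :: "(real^'n) \<Rightarrow>\<^sub>L (real^'n)"
  assumes "det (matrix (blinfun_apply L0)) \<noteq> 0"
  shows "\<exists>e>0. \<forall>L. norm (L - L0) < e \<longrightarrow>
           (0 < det (matrix (blinfun_apply L))) = (0 < det (matrix (blinfun_apply L0)))"
proof -
  have "continuous_on UNIV (\<lambda>L::(real^'n) \<Rightarrow>\<^sub>L (real^'n). det (matrix (blinfun_apply L)))"
    unfolding det_def matrix_def by (intro continuous_intros)
  then obtain e where "e > 0" and e: "\<forall>L. dist L L0 < e \<longrightarrow>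
      dist (det (matrix (blinfun_apply L))) (det (matrix (blinfun_apply L0))) < \<bar>det (matrix (blinfun_apply L0))\<bar>"
    using assms unfolding continuous_on_iff by (metis UNIV_I zero_less_abs_iff)
  show ?thesis
  proof (intro exI[of _ e] conjI allI impI)
    fix L assume "norm (L - L0) < e"
    then have "\<bar>det (matrix (blinfun_apply L)) - det (matrix (blinfun_apply L0))\<bar> < \<bar>det (matrix (blinfun_apply L0))\<bar>"
      using e by (simp add: dist_norm)
    then show "(0 < det (matrix (blinfun_apply L))) = (0 < det (matrix (blinfun_apply L0)))"
      by (auto simp: abs_if split: if_split_asm)
  qed (rule \<open>e > 0\<close>)
qed

lemma det_matrix_blinfun_comp:
  fixes L M :: "(real^'n) \<Rightarrow>\<^sub>L (real^'n)"
  shows "det (matrix (blinfun_apply L \<circ> blinfun_apply M)) = det (matrix (blinfun_apply L)) * det (matrix (blinfun_apply M))"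
proof -
  have "matrix (blinfun_apply L \<circ> blinfun_apply M) = matrix (blinfun_apply L) ** matrix (blinfun_apply M)"
    by (intro matrix_compose bounded_linear.linear blinfun.bounded_linear_right)
  then show ?thesis by (simp add: det_mul)
qed

lemma det_matrix_blinfun_conjugate:
  fixes T1 T2 F :: "(real^'n) \<Rightarrow>\<^sub>L (real^'n)"
  assumes "blinfun_apply T2 \<circ> blinfun_apply T1 = id"
  shows "det (matrix (blinfun_apply (T2 o\<^sub>L F o\<^sub>L T1))) = det (matrix (blinfun_apply F))"
proof -
  have "det (matrix (blinfun_apply T2)) * det (matrix (blinfun_apply T1)) = 1"
    using det_matrix_blinfun_comp[of T2 T1] assms by (simp add: matrix_id_mat_1)
  moreover have "det (matrix (blinfun_apply (T2 o\<^sub>L F o\<^sub>L T1))) =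
      det (matrix (blinfun_apply F)) * (det (matrix (blinfun_apply T2)) * det (matrix (blinfun_apply T1)))"
    using det_matrix_blinfun_comp[of "T2 o\<^sub>L F" T1, folded blinfun_compose.rep_eq]
      det_matrix_blinfun_comp[of T2 F, folded blinfun_compose.rep_eq]
    by (simp only: ac_simps)
  ultimately show ?thesis by simp
qed

lemma blinfun_compose3_close:
  fixes Y1 :: "'b::real_normed_vector \<Rightarrow>\<^sub>L 'c::real_normed_vector"
    and Y2 :: "'a::real_normed_vector \<Rightarrow>\<^sub>L 'b" and Y3 :: "'d::real_normed_vector \<Rightarrow>\<^sub>L 'a"
  assumes "\<kappa> > 0"
  shows "\<exists>e>0. \<forall>X1 X2 X3. norm (X1 - Y1) \<le> e \<longrightarrow> norm (X2 - Y2) \<le> e \<longrightarrow> norm (X3 - Y3) \<le> e \<longrightarrow>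
           norm ((X1 o\<^sub>L X2 o\<^sub>L X3) - (Y1 o\<^sub>L Y2 o\<^sub>L Y3)) < \<kappa>"
proof -
  have "isCont (\<lambda>X. fst X o\<^sub>L fst (snd X) o\<^sub>L snd (snd X)) (Y1, Y2, Y3)"
    by (intro continuous_intros)
  then obtain d where "d > 0" and d: "\<forall>X. dist X (Y1, Y2, Y3) < d \<longrightarrow>
      dist (fst X o\<^sub>L fst (snd X) o\<^sub>L snd (snd X)) (Y1 o\<^sub>L Y2 o\<^sub>L Y3) < \<kappa>"
    using assms unfolding continuous_at_eps_delta by force
  show ?thesis
  proof (intro exI[of _ "d / 4"] conjI allI impI)
    fix X1 X2 X3 assume "norm (X1 - Y1) \<le> d / 4" "norm (X2 - Y2) \<le> d / 4" "norm (X3 - Y3) \<le> d / 4"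
    then have "dist (X1, X2, X3) (Y1, Y2, Y3) < d"
      using norm_Pair_le[of "X1 - Y1" "(X2 - Y2, X3 - Y3)"] norm_Pair_le[of "X2 - Y2" "X3 - Y3"] \<open>d > 0\<close>
      by (simp add: dist_norm)
    then show "norm ((X1 o\<^sub>L X2 o\<^sub>L X3) - (Y1 o\<^sub>L Y2 o\<^sub>L Y3)) < \<kappa>"
      using d by (force simp: dist_norm)
  qed (use \<open>d > 0\<close> in simp)
qed

section \<open>Maps whose derivative is close to a linear map\<close>

definition derivative_close_on ::
    "'a::real_normed_vector set \<Rightarrow> ('a \<Rightarrow> 'b::real_normed_vector) \<Rightarrow> ('a \<Rightarrow>\<^sub>L 'b) \<Rightarrow> real \<Rightarrow> bool" where
  "derivative_close_on S G L \<delta> \<longleftrightarrow>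
     (\<forall>z\<in>S. \<exists>L'. (G has_derivative blinfun_apply L') (at z) \<and> norm (L' - L) \<le> \<delta>)"

lemma derivative_close_on_mono:
  "derivative_close_on S G L \<delta> \<Longrightarrow> S' \<subseteq> S \<Longrightarrow> \<delta> \<le> \<delta>' \<Longrightarrow> derivative_close_on S' G L \<delta>'"
  unfolding derivative_close_on_def by (meson order_trans subsetD)

lemma linearization_error_le:
  assumes "convex S" and close: "derivative_close_on S G L \<delta>" and "x \<in> S" "y \<in> S"
  shows "norm ((G x - L x) - (G y - L y)) \<le> \<delta> * norm (x - y)"
proof -
  obtain D where D: "\<forall>z\<in>S. (G has_derivative blinfun_apply (D z)) (at z) \<and> norm (D z - L) \<le> \<delta>"
    using close unfolding derivative_close_on_def by metis
  have "norm ((\<lambda>z. G z - L z) x - (\<lambda>z. G z - L z) y) \<le> \<delta> * norm (x - y)"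
  proof (rule differentiable_bound[OF \<open>convex S\<close> _ _ \<open>x \<in> S\<close> \<open>y \<in> S\<close>])
    fix z assume "z \<in> S"
    then have "(G has_derivative blinfun_apply (D z)) (at z within S)"
      using D has_derivative_at_withinI by blast
    then show "((\<lambda>z. G z - L z) has_derivative blinfun_apply (D z - L)) (at z within S)"
      by (auto intro!: derivative_eq_intros simp: blinfun.diff_left)
    show "onorm (blinfun_apply (D z - L)) \<le> \<delta>"
      using D \<open>z \<in> S\<close> by (simp add: norm_blinfun.rep_eq[symmetric])
  qed
  then show ?thesis by simp
qed

lemma derivative_close_fixed_points_eq:
  fixes G :: "'a::real_normed_vector \<Rightarrow> 'a"
  assumes "convex S" "derivative_close_on S G L \<delta>"
    and below: "\<And>w. c * norm w \<le> norm (L w - w)" and "\<delta> < c"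
    and "a \<in> S" "b \<in> S" "G a = a" "G b = b"
  shows "b = a"
proof -
  have "(G b - L b) - (G a - L a) = - (L (b - a) - (b - a))"
    using \<open>G a = a\<close> \<open>G b = b\<close> by (simp add: blinfun.diff_right algebra_simps)
  then have "norm (L (b - a) - (b - a)) \<le> \<delta> * norm (b - a)"
    using linearization_error_le[OF assms(1,2) \<open>b \<in> S\<close> \<open>a \<in> S\<close>] by (simp add: norm_minus_commute)
  then have "c * norm (b - a) \<le> \<delta> * norm (b - a)"
    using below order_trans by blast
  then show ?thesis using \<open>\<delta> < c\<close> by (simp add: mult_le_cancel_right)
qed

lemma segment_image_norm_le:
  fixes G :: "'a::real_normed_vector \<Rightarrow> 'a"
  assumes "convex S" "derivative_close_on S G L (1/2)"
    and "a \<in> S" "b \<in> S" "G a = a" "G b = b" "0 \<le> t" "t \<le> 1"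
  shows "norm (G ((1 - t) *\<^sub>R a + t *\<^sub>R b) - a) \<le> norm (b - a)"
proof -
  define z where "z = (1 - t) *\<^sub>R a + t *\<^sub>R b"
  have "z \<in> S"
    unfolding z_def by (rule convexD_alt) fact+
  define E1 where "E1 = (G z - L z) - (G b - L b)"
  define E2 where "E2 = (G b - L b) - (G a - L a)"
  have E1: "norm E1 \<le> 1/2 * ((1 - t) * norm (b - a))"
  proof -
    have "z - b = (1 - t) *\<^sub>R (a - b)" unfolding z_def by (simp add: algebra_simps)
    then have "norm (z - b) = (1 - t) * norm (b - a)"
      using \<open>t \<le> 1\<close> by (simp add: norm_minus_commute)
    then show ?thesis
      using linearization_error_le[OF assms(1,2) \<open>z \<in> S\<close> \<open>b \<in> S\<close>] unfolding E1_def by simp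
  qed
  have E2: "norm E2 \<le> 1/2 * norm (b - a)"
    using linearization_error_le[OF assms(1,2) \<open>b \<in> S\<close> \<open>a \<in> S\<close>] unfolding E2_def by simp
  have "L z = (1 - t) *\<^sub>R L a + t *\<^sub>R L b"
    unfolding z_def by (simp add: blinfun.add_right blinfun.scaleR_right)
  then have "G z - a = E1 + t *\<^sub>R (b - a) + (1 - t) *\<^sub>R E2"
    using \<open>G a = a\<close> \<open>G b = b\<close> unfolding E1_def E2_def by (simp add: algebra_simps)
  then have "norm (G z - a) \<le> norm E1 + t * norm (b - a) + (1 - t) * norm E2"
    using assms(7,8) by (metis norm_triangle_mono norm_scaleR abs_of_nonneg diff_ge_0_iff_ge order_refl)
  also have "\<dots> \<le> norm (b - a)"
    using E1 E2 mult_left_mono[OF E2, of "1 - t"] \<open>t \<le> 1\<close> by (simp add: algebra_simps)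
  finally show ?thesis unfolding z_def .
qed

lemma fixed_point_on_segment_to_image:
  fixes G :: "'a::real_normed_vector \<Rightarrow> 'a"
  assumes "convex S" "derivative_close_on S G L \<delta>"
    and below: "\<And>w. c * norm w \<le> norm ((1 - s) *\<^sub>R w + s *\<^sub>R L w)" and "\<delta> < c"
    and "0 \<le> s" "s \<le> 1" "p \<in> S" "q \<in> S" and q: "q = (1 - s) *\<^sub>R p + s *\<^sub>R G p" and "G q = q"
  shows "G p = p"
proof -
  define w where "w = G p - p"
  have qp: "q - p = s *\<^sub>R w" unfolding q w_def by (simp add: algebra_simps)
  have "L q - L p = s *\<^sub>R L w"
    using qp by (metis blinfun.diff_right blinfun.scaleR_right)
  then have "(G p - L p) - (G q - L q) = (1 - s) *\<^sub>R w + s *\<^sub>R L w"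
    using \<open>G q = q\<close> qp unfolding w_def by (simp add: algebra_simps)
  then have "c * norm w \<le> \<delta> * norm (p - q)"
    using below linearization_error_le[OF assms(1,2) \<open>p \<in> S\<close> \<open>q \<in> S\<close>] by (metis order_trans)
  also have "\<dots> \<le> \<delta> * norm w"
  proof -
    have "0 \<le> \<delta>" using assms(2) \<open>p \<in> S\<close> unfolding derivative_close_on_def by (meson norm_ge_zero order_trans)
    moreover have "norm (p - q) \<le> norm w"
      using qp \<open>0 \<le> s\<close> \<open>s \<le> 1\<close> norm_minus_commute[of p q]
      by (simp add: mult_left_le_one_le)
    ultimately show ?thesis by (rule mult_left_mono[rotated])
  qed
  finally show ?thesis using \<open>\<delta> < c\<close> unfolding w_def by (simp add: mult_le_cancel_right)
qed

lemma continuous_on_open_small_ball: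
  fixes g :: "'b::metric_space \<Rightarrow> 'c::metric_space"
  assumes "open V" "a \<in> V" "continuous_on V g" "e > 0"
  shows "\<exists>r>0. ball a r \<subseteq> V \<and> (\<forall>y\<in>ball a r. dist (g y) (g a) < e)"
proof -
  obtain r1 where "r1 > 0" "ball a r1 \<subseteq> V" using assms(1,2) open_contains_ball by blast
  moreover obtain r2 where "r2 > 0" "\<forall>y\<in>V. dist y a < r2 \<longrightarrow> dist (g y) (g a) < e"
    using assms(2-4) unfolding continuous_on_iff by blast
  ultimately show ?thesis
    by (intro exI[of _ "min r1 r2"]) (auto simp: dist_commute subset_iff)
qed

lemma C1_on_derivative_close_near:
  assumes "C1_on X h" "open X" "a \<in> X" "(h has_derivative blinfun_apply L) (at a)" "e > 0" "\<delta> > 0"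
  shows "\<exists>r>0. ball a r \<subseteq> X \<and> (\<forall>z\<in>ball a r. dist (h z) (h a) < \<delta>) \<and>
           derivative_close_on (ball a r) h L e"
proof -
  obtain D where D: "\<forall>z\<in>X. (h has_derivative blinfun_apply (D z)) (at z)" and "continuous_on X D"
    using assms(1) unfolding C1_on_def by blast
  have "D a = L"
    using D assms(3,4) has_derivative_unique blinfun_eqI by metis
  obtain r1 where "r1 > 0" "ball a r1 \<subseteq> X" and r1: "\<forall>z\<in>ball a r1. dist (D z) L < e"
    using continuous_on_open_small_ball[OF assms(2,3) \<open>continuous_on X D\<close> assms(5)] \<open>D a = L\<close> by auto
  have "continuous_on X h"
    using D by (intro continuous_at_imp_continuous_on) (metis has_derivative_continuous)
  then obtain r2 where "r2 > 0" "ball a r2 \<subseteq> X" and r2: "\<forall>z\<in>ball a r2. dist (h z) (h a) < \<delta>"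
    using continuous_on_open_small_ball[OF assms(2,3) _ assms(6)] by blast
  have "derivative_close_on (ball a (min r1 r2)) h L e"
    unfolding derivative_close_on_def using D r1 \<open>ball a r1 \<subseteq> X\<close>
    by (fastforce simp: dist_norm less_imp_le)
  then show ?thesis
    using \<open>r1 > 0\<close> \<open>r2 > 0\<close> \<open>ball a r1 \<subseteq> X\<close> r2 by (intro exI[of _ "min r1 r2"]) auto
qed

section \<open>Charts and local representatives\<close>

lemma is_chart_facts:
  assumes "is_chart U \<phi>"
  shows chart_inj: "inj_on \<phi> U"
    and chart_inv_f: "\<And>p. p \<in> U \<Longrightarrow> inv_into U \<phi> (\<phi> p) = p"
    and chart_inv_in: "\<And>z. z \<in> \<phi> ` U \<Longrightarrow> inv_into U \<phi> z \<in> U"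
    and chart_f_inv: "\<And>z. z \<in> \<phi> ` U \<Longrightarrow> \<phi> (inv_into U \<phi> z) = z"
    and chart_continuous: "continuous_on U \<phi>"
    and chart_inv_continuous: "continuous_on (\<phi> ` U) (inv_into U \<phi>)"
    and chart_open_dom: "open U"
    and chart_open_image: "open (\<phi> ` U)"
    and chart_open_map: "\<And>V. open V \<Longrightarrow> V \<subseteq> U \<Longrightarrow> open (\<phi> ` V)"
proof -
  obtain \<psi> where h: "homeomorphism U (\<phi> ` U) \<phi> \<psi>" and oU: "open U" and oI: "open (\<phi> ` U)"
    using assms unfolding is_chart_def by blast
  have \<psi>: "\<And>p. p \<in> U \<Longrightarrow> \<psi> (\<phi> p) = p" using h by (simp add: homeomorphism_def)
  show inj: "inj_on \<phi> U" by (metis \<psi> inj_onI)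
  show "\<And>p. p \<in> U \<Longrightarrow> inv_into U \<phi> (\<phi> p) = p" using inj by simp
  show "\<And>z. z \<in> \<phi> ` U \<Longrightarrow> inv_into U \<phi> z \<in> U" by (simp add: inv_into_into)
  show "\<And>z. z \<in> \<phi> ` U \<Longrightarrow> \<phi> (inv_into U \<phi> z) = z" by (simp add: f_inv_into_f)
  show "continuous_on U \<phi>" using h by (simp add: homeomorphism_def)
  have "continuous_on (\<phi> ` U) \<psi>" using h by (simp add: homeomorphism_def)
  moreover have "\<And>z. z \<in> \<phi> ` U \<Longrightarrow> \<psi> z = inv_into U \<phi> z"
    using \<psi> inj by auto
  ultimately show "continuous_on (\<phi> ` U) (inv_into U \<phi>)" using continuous_on_cong by blast
  show "open U" "open (\<phi> ` U)" by (fact oU oI)+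
  fix V assume "open V" "V \<subseteq> U"
  then have "openin (top_of_set U) V" by (simp add: oU open_openin_trans)
  then have "openin (top_of_set (\<phi> ` U)) (\<phi> ` V)" by (rule homeomorphism_imp_open_map[OF h])
  then show "open (\<phi> ` V)" using oI openin_open_trans by blast
qed

lemma mem_chart_ball_iff:
  assumes "is_chart U \<phi>"
  shows "p \<in> chart_ball (U, \<phi>) x \<epsilon> \<longleftrightarrow> p \<in> U \<and> \<phi> p \<in> ball (\<phi> x) \<epsilon>"
proof
  assume "p \<in> chart_ball (U, \<phi>) x \<epsilon>"
  then obtain z where "z \<in> ball (\<phi> x) \<epsilon>" "z \<in> \<phi> ` U" "p = inv_into U \<phi> z"
    unfolding chart_ball_def by auto
  then show "p \<in> U \<and> \<phi> p \<in> ball (\<phi> x) \<epsilon>"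
    using chart_inv_in[OF assms] chart_f_inv[OF assms] by auto
next
  assume "p \<in> U \<and> \<phi> p \<in> ball (\<phi> x) \<epsilon>"
  then show "p \<in> chart_ball (U, \<phi>) x \<epsilon>"
    using chart_inv_f[OF assms] unfolding chart_ball_def by (metis IntI fst_conv imageI snd_conv)
qed

lemma local_rep_apply:
  assumes "is_chart (fst c) (snd c)" "p \<in> fst c"
  shows "local_rep c d h (snd c p) = snd d (h p)"
  using chart_inv_f[OF assms] by (simp add: local_rep_def)

lemma transition_eq_local_rep: "transition c d = local_rep c d id"
  by (simp add: transition_def local_rep_def)

lemma open_local_rep_domain:
  assumes "is_chart (fst c) (snd c)" "continuous_on UNIV h" "open W"
  shows "open (snd c ` (fst c \<inter> h -` W))"
proof -
  have "open (fst c \<inter> h -` W)"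
    using assms chart_open_dom[OF assms(1)] continuous_on_open_vimage[of UNIV h] by auto
  then show ?thesis using chart_open_map[OF assms(1)] by blast
qed

lemma local_rep_domain_iff:
  assumes "is_chart (fst c) (snd c)" "p \<in> fst c"
  shows "snd c p \<in> snd c ` (fst c \<inter> h -` W) \<longleftrightarrow> h p \<in> W"
  using chart_inj[OF assms(1)] assms(2) by (auto dest: inj_onD)

lemma local_rep_domain_inv:
  assumes "is_chart (fst c) (snd c)" "z \<in> snd c ` (fst c \<inter> h -` W)"
  shows "inv_into (fst c) (snd c) z \<in> fst c" "h (inv_into (fst c) (snd c) z) \<in> W"
  using assms chart_inv_f[OF assms(1)] by auto

lemma chart_inv_image_cball:
  assumes "is_chart (fst c) (snd c)" "cball z r \<subseteq> snd c ` fst c"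
  shows "compact (inv_into (fst c) (snd c) ` cball z r)"
    and "inv_into (fst c) (snd c) ` cball z r \<subseteq> fst c"
    and "snd c ` inv_into (fst c) (snd c) ` cball z r = cball z r"
proof -
  show "compact (inv_into (fst c) (snd c) ` cball z r)"
    using assms by (intro compact_continuous_image continuous_on_subset[OF chart_inv_continuous]) auto
  show "inv_into (fst c) (snd c) ` cball z r \<subseteq> fst c"
    using assms chart_inv_in by blast
  show "snd c ` inv_into (fst c) (snd c) ` cball z r = cball z r"
    using assms chart_f_inv[OF assms(1)] by (force simp: image_comp)
qed

lemma local_rep_id_has_derivative:
  assumes "is_chart (fst c) (snd c)" "p \<in> fst c"
  shows "(local_rep c c id has_derivative id) (at (snd c p))"
proof (rule has_derivative_transform_within_open[OF _ chart_open_image[OF assms(1)]])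
  show "(id has_derivative id) (at (snd c p))" by (simp add: id_def)
  show "snd c p \<in> snd c ` fst c" using assms(2) by blast
  show "id z = local_rep c c id z" if "z \<in> snd c ` fst c" for z
    using chart_f_inv[OF assms(1) that] by (simp add: local_rep_def)
qed

lemma local_rep_comp_has_derivative:
  assumes c: "is_chart (fst c) (snd c)" and d: "is_chart (fst d) (snd d)"
    and "continuous_on UNIV h" and p: "p \<in> fst c" "h p \<in> fst d"
    and L: "(local_rep c d h has_derivative L) (at (snd c p))"
    and M: "(local_rep d e k has_derivative M) (at (snd d (h p)))"
  shows "(local_rep c e (k \<circ> h) has_derivative M \<circ> L) (at (snd c p))"
proof (rule has_derivative_transform_within_open[OF diff_chain_at[OF L]])
  show "(local_rep d e k has_derivative M) (at (local_rep c d h (snd c p)))"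
    using M local_rep_apply[OF c p(1)] by simp
  show "open (snd c ` (fst c \<inter> h -` fst d))"
    by (rule open_local_rep_domain[OF c \<open>continuous_on UNIV h\<close> chart_open_dom[OF d]])
  show "snd c p \<in> snd c ` (fst c \<inter> h -` fst d)" using p by blast
  fix z assume "z \<in> snd c ` (fst c \<inter> h -` fst d)"
  then obtain q where "q \<in> fst c" "h q \<in> fst d" "z = snd c q" by blast
  then show "(local_rep d e k \<circ> local_rep c d h) z = local_rep c e (k \<circ> h) z"
    using local_rep_apply[OF c] local_rep_apply[OF d] by simp
qed

lemma local_rep_change_of_chart_has_derivative:
  assumes c: "is_chart (fst c) (snd c)" and d: "is_chart (fst d) (snd d)" and "continuous_on UNIV g"
    and "p \<in> fst c" "p \<in> fst d" "g p \<in> fst c" "g p \<in> fst d"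
    and L1: "(local_rep d c id has_derivative blinfun_apply L1) (at (snd d p))"
    and LG: "(local_rep c c g has_derivative blinfun_apply LG) (at (snd c p))"
    and L2: "(local_rep c d id has_derivative blinfun_apply L2) (at (snd c (g p)))"
  shows "(local_rep d d g has_derivative blinfun_apply (L2 o\<^sub>L LG o\<^sub>L L1)) (at (snd d p))"
proof -
  have to_c: "(local_rep d c (g \<circ> id) has_derivative blinfun_apply LG \<circ> blinfun_apply L1) (at (snd d p))"
    by (rule local_rep_comp_has_derivative[where d = c]) (use assms in auto)
  have "(local_rep d d (id \<circ> (g \<circ> id)) has_derivative
      blinfun_apply L2 \<circ> (blinfun_apply LG \<circ> blinfun_apply L1)) (at (snd d p))"
    by (rule local_rep_comp_has_derivative[where d = c]) (use assms to_c in auto)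
  then show ?thesis by (simp add: blinfun_compose.rep_eq comp_assoc)
qed

lemma local_rep_id_derivatives_inverse:
  assumes c: "is_chart (fst c) (snd c)" and d: "is_chart (fst d) (snd d)" and "p \<in> fst c" "p \<in> fst d"
    and T1: "(local_rep d c id has_derivative T1) (at (snd d p))"
    and T2: "(local_rep c d id has_derivative T2) (at (snd c p))"
  shows "T2 \<circ> T1 = id"
proof -
  have "(local_rep d d (id \<circ> id) has_derivative T2 \<circ> T1) (at (snd d p))"
    by (rule local_rep_comp_has_derivative[where d = c]) (use assms in auto)
  then show ?thesis
    using local_rep_id_has_derivative[OF d \<open>p \<in> fst d\<close>] has_derivative_unique by auto
qed

lemma C1_on_has_blinfun_derivative:
  assumes "C1_on X h" "z \<in> X"
  obtains L where "(h has_derivative blinfun_apply L) (at z)"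
    and "frechet_derivative h (at z) = blinfun_apply L"
  using assms unfolding C1_on_def by (metis frechet_derivative_at)

lemma C1_diffeo_continuous: "C1_diffeo A h \<Longrightarrow> continuous_on UNIV h"
  unfolding C1_diffeo_def C1_map_def by blast

lemma C1_diffeo_inv: "C1_diffeo A h \<Longrightarrow> C1_diffeo A (inv_into UNIV h)"
  unfolding C1_diffeo_def by (simp add: bij_imp_bij_inv inv_inv_eq)

lemma C1_diffeo_local_rep_C1:
  "C1_diffeo A h \<Longrightarrow> c \<in> A \<Longrightarrow> d \<in> A \<Longrightarrow> C1_on (snd c ` (fst c \<inter> h -` fst d)) (local_rep c d h)"
  unfolding C1_diffeo_def C1_map_def by blast

lemma C1_diffeo_local_rep_has_derivative:
  assumes "C1_diffeo A h" "c \<in> A" "d \<in> A" "p \<in> fst c" "h p \<in> fst d"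
  obtains L where "(local_rep c d h has_derivative blinfun_apply L) (at (snd c p))"
    and "frechet_derivative (local_rep c d h) (at (snd c p)) = blinfun_apply L"
  using C1_on_has_blinfun_derivative[OF C1_diffeo_local_rep_C1[OF assms(1-3)]] assms(4,5) by blast

lemma onorm_frechet_derivative_diff:
  assumes "(G has_derivative blinfun_apply LG) (at w)" "(F has_derivative blinfun_apply LF) (at w)"
  shows "onorm (\<lambda>v. frechet_derivative G (at w) v - frechet_derivative F (at w) v) = norm (LG - LF)"
proof -
  have "(\<lambda>v. frechet_derivative G (at w) v - frechet_derivative F (at w) v) = blinfun_apply (LG - LF)"
    using frechet_derivative_at[OF assms(1)] frechet_derivative_at[OF assms(2)]
    by (simp add: fun_eq_iff blinfun.diff_left)
  then show ?thesis by (simp add: norm_blinfun.rep_eq)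
qed

lemma atlas_is_chart: "oriented_C1_atlas A \<Longrightarrow> c \<in> A \<Longrightarrow> is_chart (fst c) (snd c)"
  unfolding oriented_C1_atlas_def by blast

lemma atlas_covers: "oriented_C1_atlas A \<Longrightarrow> \<exists>c\<in>A. p \<in> fst c"
  unfolding oriented_C1_atlas_def by blast

lemma atlas_transition_has_derivative:
  assumes "oriented_C1_atlas A" "c \<in> A" "d \<in> A" "p \<in> fst c" "p \<in> fst d"
  obtains L where "(local_rep c d id has_derivative blinfun_apply L) (at (snd c p))"
    and "0 < det (matrix (blinfun_apply L))"
proof -
  have "snd c p \<in> overlap_dom c d" using assms(4,5) unfolding overlap_dom_def by blast
  then show thesis
    using assms(1-3) that C1_on_has_blinfun_derivative[of "overlap_dom c d" "transition c d" "snd c p"]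
    unfolding oriented_C1_atlas_def transition_eq_local_rep by metis
qed

section \<open>Maps isotopic to the identity preserve orientation\<close>

definition local_jacobian :: "'a chartT \<Rightarrow> 'a chartT \<Rightarrow> ('a \<Rightarrow> 'a) \<Rightarrow> 'a \<Rightarrow> real" where
  "local_jacobian c d h p = det (matrix (frechet_derivative (local_rep c d h) (at (snd c p))))"

lemma local_jacobian_id_pos:
  assumes "oriented_C1_atlas A" "c \<in> A" "d \<in> A" "p \<in> fst c" "p \<in> fst d"
  shows "0 < local_jacobian c d id p"
proof -
  obtain L where "(local_rep c d id has_derivative blinfun_apply L) (at (snd c p))"
    and "0 < det (matrix (blinfun_apply L))"
    using atlas_transition_has_derivative[OF assms] .
  then show ?thesis unfolding local_jacobian_def by (metis frechet_derivative_at)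
qed

lemma local_jacobian_nonzero:
  assumes at: "oriented_C1_atlas A" and h: "C1_diffeo A h"
    and "c \<in> A" "d \<in> A" "p \<in> fst c" "h p \<in> fst d"
  shows "local_jacobian c d h p \<noteq> 0"
proof -
  have c: "is_chart (fst c) (snd c)" and d: "is_chart (fst d) (snd d)"
    using at assms(3,4) atlas_is_chart by blast+
  have inv_h: "inv_into UNIV h \<circ> h = id"
    using h unfolding C1_diffeo_def by (simp add: bij_is_inj)
  obtain L1 where L1: "(local_rep c d h has_derivative blinfun_apply L1) (at (snd c p))"
    and L1_eq: "frechet_derivative (local_rep c d h) (at (snd c p)) = blinfun_apply L1"
    using C1_diffeo_local_rep_has_derivative[OF h assms(3-6)] .
  obtain L2 where L2: "(local_rep d c (inv_into UNIV h) has_derivative blinfun_apply L2) (at (snd d (h p)))"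
    using C1_diffeo_local_rep_has_derivative[OF C1_diffeo_inv[OF h] assms(4,3) assms(6)]
      pointfree_idE[OF inv_h] assms(5) by metis
  have "(local_rep c c id has_derivative blinfun_apply L2 \<circ> blinfun_apply L1) (at (snd c p))"
    using local_rep_comp_has_derivative[OF c d C1_diffeo_continuous[OF h] assms(5,6) L1 L2]
    unfolding inv_h .
  then have "blinfun_apply L2 \<circ> blinfun_apply L1 = id"
    using local_rep_id_has_derivative[OF c assms(5)] has_derivative_unique by blast
  then have "det (matrix (blinfun_apply L2)) * det (matrix (blinfun_apply L1)) = 1"
    using det_matrix_blinfun_comp[of L2 L1] by (simp add: matrix_id_mat_1)
  then show ?thesis unfolding local_jacobian_def L1_eq by auto
qed

lemma local_jacobian_pos_iff:
  assumes at: "oriented_C1_atlas A" and h: "C1_diffeo A h" and "c \<in> A" "d \<in> A" "d' \<in> A"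
    and "p \<in> fst c" "h p \<in> fst d" "h p \<in> fst d'"
  shows "0 < local_jacobian c d' h p \<longleftrightarrow> 0 < local_jacobian c d h p"
proof -
  have c: "is_chart (fst c) (snd c)" and d: "is_chart (fst d) (snd d)"
    using at assms(3,4) atlas_is_chart by blast+
  obtain L where L: "(local_rep c d h has_derivative blinfun_apply L) (at (snd c p))"
    and L_eq: "frechet_derivative (local_rep c d h) (at (snd c p)) = blinfun_apply L"
    using C1_diffeo_local_rep_has_derivative[OF h assms(3,4,6,7)] .
  obtain T where T: "(local_rep d d' id has_derivative blinfun_apply T) (at (snd d (h p)))"
    and "0 < det (matrix (blinfun_apply T))"
    using atlas_transition_has_derivative[OF at assms(4,5,7,8)] .
  have "(local_rep c d' h has_derivative blinfun_apply T \<circ> blinfun_apply L) (at (snd c p))"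
    using local_rep_comp_has_derivative[OF c d C1_diffeo_continuous[OF h] assms(6,7) L T]
    unfolding id_comp .
  then have "local_jacobian c d' h p = det (matrix (blinfun_apply T)) * local_jacobian c d h p"
    unfolding local_jacobian_def L_eq
    by (metis frechet_derivative_at det_matrix_blinfun_comp)
  then show ?thesis using \<open>0 < det (matrix (blinfun_apply T))\<close> by (simp add: zero_less_mult_iff)
qed

lemma local_jacobian_sign_locally_constant:
  assumes at: "oriented_C1_atlas A" and h: "C1_diffeo A h"
    and "c \<in> A" "d \<in> A" "p \<in> fst c" "h p \<in> fst d"
  shows "\<exists>F \<eta>. C1_nbhd_data A h F \<eta> \<and> (\<forall>g\<in>C1_basic_nbhd A h F \<eta>.
           g p \<in> fst d \<and> (0 < local_jacobian c d g p \<longleftrightarrow> 0 < local_jacobian c d h p))"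
proof -
  obtain L where L: "(local_rep c d h has_derivative blinfun_apply L) (at (snd c p))"
    and L_eq: "frechet_derivative (local_rep c d h) (at (snd c p)) = blinfun_apply L"
    using C1_diffeo_local_rep_has_derivative[OF h assms(3-6)] .
  have "det (matrix (blinfun_apply L)) \<noteq> 0"
    using local_jacobian_nonzero[OF assms] unfolding local_jacobian_def L_eq .
  then obtain e where "e > 0" and e: "\<forall>L'. norm (L' - L) < e \<longrightarrow>
      (0 < det (matrix (blinfun_apply L'))) = (0 < det (matrix (blinfun_apply L)))"
    using det_sign_locally_constant by blast
  have "C1_nbhd_data A h {(c, d, {p})} e"
    unfolding C1_nbhd_data_def using \<open>e > 0\<close> assms(3-6) by auto
  moreover have "g p \<in> fst d \<and> (0 < local_jacobian c d g p \<longleftrightarrow> 0 < local_jacobian c d h p)"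
    if "g \<in> C1_basic_nbhd A h {(c, d, {p})} e" for g
  proof -
    have g: "C1_diffeo A g" and "g p \<in> fst d"
      and close: "onorm (\<lambda>v. frechet_derivative (local_rep c d g) (at (snd c p)) v
                   - frechet_derivative (local_rep c d h) (at (snd c p)) v) < e"
      using that unfolding C1_basic_nbhd_def by auto
    obtain L' where L': "(local_rep c d g has_derivative blinfun_apply L') (at (snd c p))"
      and L'_eq: "frechet_derivative (local_rep c d g) (at (snd c p)) = blinfun_apply L'"
      using C1_diffeo_local_rep_has_derivative[OF g assms(3-5) \<open>g p \<in> fst d\<close>] .
    have "norm (L' - L) < e"
      using close onorm_frechet_derivative_diff[OF L' L] by simp
    then show ?thesis
      using e \<open>g p \<in> fst d\<close> unfolding local_jacobian_def L_eq L'_eq by blast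
  qed
  ultimately show ?thesis by blast
qed

lemma Diff0_local_jacobian_pos:
  assumes at: "oriented_C1_atlas A" and f: "f \<in> Diff0 A"
    and "c \<in> A" "d \<in> A" "p \<in> fst c" "f p \<in> fst d"
  shows "0 < local_jacobian c d f p"
proof -
  obtain H :: "real \<Rightarrow> 'a \<Rightarrow> 'a" where H0: "H 0 = id" and H1: "H 1 = f"
    and H: "\<forall>t\<in>{0..1}. C1_diffeo A (H t)"
    and H_cont: "\<forall>t\<in>{0..1}. \<forall>F \<epsilon>. C1_nbhd_data A (H t) F \<epsilon> \<longrightarrow>
            (\<exists>\<delta>>0. \<forall>s\<in>{0..1}. \<bar>s - t\<bar> < \<delta> \<longrightarrow> H s \<in> C1_basic_nbhd A (H t) F \<epsilon>)"
    using f unfolding Diff0_def by blast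
  define dd where "dd t = (SOME d. d \<in> A \<and> H t p \<in> fst d)" for t
  have dd: "dd t \<in> A \<and> H t p \<in> fst (dd t)" for t
    unfolding dd_def by (rule someI_ex) (use atlas_covers[OF at] in blast)
  define P where "P t \<longleftrightarrow> 0 < local_jacobian c (dd t) (H t) p" for t
  have "\<forall>\<^sub>F s in at t within {0..1}. P t = P s" if t: "t \<in> {0..1}" for t
  proof -
    obtain F \<eta> where "C1_nbhd_data A (H t) F \<eta>" and nbhd: "\<forall>g\<in>C1_basic_nbhd A (H t) F \<eta>.
        g p \<in> fst (dd t) \<and> (0 < local_jacobian c (dd t) g p \<longleftrightarrow> P t)"
      using local_jacobian_sign_locally_constant[OF at _ \<open>c \<in> A\<close> _ \<open>p \<in> fst c\<close>] H t dd
      unfolding P_def by blast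
    then obtain \<delta> where "\<delta> > 0"
      and \<delta>: "\<forall>s\<in>{0..1}. \<bar>s - t\<bar> < \<delta> \<longrightarrow> H s \<in> C1_basic_nbhd A (H t) F \<eta>"
      using H_cont t by blast
    have "P t = P s" if "s \<in> {0..1}" "dist s t < \<delta>" for s
      using nbhd \<delta> that local_jacobian_pos_iff[OF at _ \<open>c \<in> A\<close> _ _ \<open>p \<in> fst c\<close>] H dd
      unfolding P_def dist_real_def by metis
    then show ?thesis unfolding eventually_at using \<open>\<delta> > 0\<close> by blast
  qed
  then have "P 0 = P 1"
    by (intro connected_local_const[of "{0..1}"]) auto
  moreover have "P 0"
    using local_jacobian_id_pos[OF at \<open>c \<in> A\<close> _ \<open>p \<in> fst c\<close>] dd[of 0] unfolding P_def H0 by simp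
  ultimately show ?thesis
    using local_jacobian_pos_iff[OF at _ \<open>c \<in> A\<close> dd[of 1, THEN conjunct1] \<open>d \<in> A\<close> \<open>p \<in> fst c\<close>]
      H dd[of 1] H1 assms(6)
    unfolding P_def by auto
qed

section \<open>The linearisation at an accumulation point of fixed points\<close>

lemma C1_nbhd_data_chart_cball:
  assumes at: "oriented_C1_atlas A" and "c \<in> A" and "\<eta> > 0"
    and "cball z \<rho> \<subseteq> snd c ` (fst c \<inter> f -` fst c)"
  shows "C1_nbhd_data A f {(c, c, inv_into (fst c) (snd c) ` cball z \<rho>)} \<eta>"
proof -
  have c: "is_chart (fst c) (snd c)" using at \<open>c \<in> A\<close> atlas_is_chart by blast
  have "cball z \<rho> \<subseteq> snd c ` fst c" using assms(4) by blast
  note K = chart_inv_image_cball[OF c this]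
  have "f (inv_into (fst c) (snd c) w) \<in> fst c" if "w \<in> cball z \<rho>" for w
    using local_rep_domain_inv(2)[OF c, of w f "fst c"] assms(4) that by blast
  then have "f ` inv_into (fst c) (snd c) ` cball z \<rho> \<subseteq> fst c" by blast
  then show ?thesis unfolding C1_nbhd_data_def using K(1,2) \<open>c \<in> A\<close> \<open>\<eta> > 0\<close> by auto
qed

lemma C1_basic_nbhd_in_chart_cball:
  assumes at: "oriented_C1_atlas A" and "c \<in> A" and cball: "cball z \<rho> \<subseteq> snd c ` fst c"
    and g: "g \<in> C1_basic_nbhd A f {(c, c, inv_into (fst c) (snd c) ` cball z \<rho>)} \<eta>"
    and w: "w \<in> cball z \<rho>"
    and LF: "(local_rep c c f has_derivative blinfun_apply LF) (at w)"
  shows "w \<in> snd c ` (fst c \<inter> g -` fst c)"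
    and "dist (local_rep c c g w) (local_rep c c f w) < \<eta>"
    and "\<exists>LG. (local_rep c c g has_derivative blinfun_apply LG) (at w) \<and> norm (LG - LF) < \<eta>"
proof -
  have c: "is_chart (fst c) (snd c)" using at \<open>c \<in> A\<close> atlas_is_chart by blast
  note K = chart_inv_image_cball[OF c cball]
  have "C1_diffeo A g" and "g ` inv_into (fst c) (snd c) ` cball z \<rho> \<subseteq> fst c"
    and "\<forall>w\<in>snd c ` inv_into (fst c) (snd c) ` cball z \<rho>.
          norm (local_rep c c g w - local_rep c c f w) < \<eta> \<and>
          onorm (\<lambda>v. frechet_derivative (local_rep c c g) (at w) v
                     - frechet_derivative (local_rep c c f) (at w) v) < \<eta>"
    using g unfolding C1_basic_nbhd_def by auto
  note close = this(3)[unfolded K(3), rule_format, OF w]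
  show dom: "w \<in> snd c ` (fst c \<inter> g -` fst c)"
    using K(2,3) \<open>g ` _ \<subseteq> fst c\<close> w by blast
  show "dist (local_rep c c g w) (local_rep c c f w) < \<eta>"
    using close by (simp add: dist_norm)
  obtain LG where "(local_rep c c g has_derivative blinfun_apply LG) (at w)"
    using dom C1_on_has_blinfun_derivative[OF C1_diffeo_local_rep_C1[OF \<open>C1_diffeo A g\<close> \<open>c \<in> A\<close> \<open>c \<in> A\<close>]]
    by blast
  with close onorm_frechet_derivative_diff[OF _ LF]
  show "\<exists>LG. (local_rep c c g has_derivative blinfun_apply LG) (at w) \<and> norm (LG - LF) < \<eta>"
    by auto
qed

lemma C1_basic_nbhd_local_rep_close:
  assumes at: "oriented_C1_atlas A" and f: "C1_diffeo A f" and "c \<in> A" "p \<in> fst c" "f p \<in> fst c"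
    and L: "(local_rep c c f has_derivative blinfun_apply L) (at (snd c p))" and "e > 0" "\<delta> > 0"
  shows "\<exists>\<rho>>0. \<exists>K \<eta>. C1_nbhd_data A f {(c, c, K)} \<eta> \<and> (\<forall>g\<in>C1_basic_nbhd A f {(c, c, K)} \<eta>.
           ball (snd c p) \<rho> \<subseteq> snd c ` (fst c \<inter> g -` fst c) \<and>
           (\<forall>w\<in>ball (snd c p) \<rho>. dist (local_rep c c g w) (snd c (f p)) < \<delta>) \<and>
           derivative_close_on (ball (snd c p) \<rho>) (local_rep c c g) L e)"
proof -
  have c: "is_chart (fst c) (snd c)" using at \<open>c \<in> A\<close> atlas_is_chart by blast
  have "snd c p \<in> snd c ` (fst c \<inter> f -` fst c)" "local_rep c c f (snd c p) = snd c (f p)"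
    using assms(4,5) local_rep_apply[OF c] by auto
  then obtain r where "r > 0" and r_dom: "ball (snd c p) r \<subseteq> snd c ` (fst c \<inter> f -` fst c)"
    and F_near: "\<forall>w\<in>ball (snd c p) r. dist (local_rep c c f w) (snd c (f p)) < \<delta>/2"
    and F_close: "derivative_close_on (ball (snd c p) r) (local_rep c c f) L (e/2)"
    using C1_on_derivative_close_near[OF C1_diffeo_local_rep_C1[OF f \<open>c \<in> A\<close> \<open>c \<in> A\<close>]
        open_local_rep_domain[OF c C1_diffeo_continuous[OF f] chart_open_dom[OF c]] _ L]
      \<open>e > 0\<close> \<open>\<delta> > 0\<close> by (metis half_gt_zero)
  have "ball (snd c p) (r/2) \<subseteq> cball (snd c p) (r/2)" "cball (snd c p) (r/2) \<subseteq> ball (snd c p) r"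
    using \<open>r > 0\<close> by auto
  note cball = this(2)[THEN order_trans, OF r_dom]
  then have cball': "cball (snd c p) (r/2) \<subseteq> snd c ` fst c" by blast
  \<comment> \<open>basic \<open>C\<^sup>1\<close>-neighbourhoods only control maps on compact sets, hence the closed ball\<close>
  define K where "K = inv_into (fst c) (snd c) ` cball (snd c p) (r/2)"
  define \<eta> where "\<eta> = min (e/2) (\<delta>/2)"
  have "w \<in> snd c ` (fst c \<inter> g -` fst c) \<and> dist (local_rep c c g w) (snd c (f p)) < \<delta> \<and>
      (\<exists>L'. (local_rep c c g has_derivative blinfun_apply L') (at w) \<and> norm (L' - L) \<le> e)"
    if g: "g \<in> C1_basic_nbhd A f {(c, c, K)} \<eta>" and w: "w \<in> ball (snd c p) (r/2)" for g w
  proof -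
    have "w \<in> cball (snd c p) (r/2)" "w \<in> ball (snd c p) r"
      using w \<open>ball _ (r/2) \<subseteq> cball _ _\<close> \<open>cball _ (r/2) \<subseteq> ball _ r\<close> by blast+
    then obtain LF where LF: "(local_rep c c f has_derivative blinfun_apply LF) (at w)"
      and "norm (LF - L) \<le> e/2"
      using F_close unfolding derivative_close_on_def by blast
    note g_near = C1_basic_nbhd_in_chart_cball[OF at \<open>c \<in> A\<close> cball' g[unfolded K_def] \<open>w \<in> cball _ _\<close> LF]
    have "dist (local_rep c c g w) (snd c (f p)) < \<delta>"
      by (rule dist_triangle_half_r[of "local_rep c c f w"])
        (use g_near(2) F_near \<open>w \<in> ball (snd c p) r\<close> in \<open>auto simp: dist_commute \<eta>_def\<close>)
    moreover obtain LG where "(local_rep c c g has_derivative blinfun_apply LG) (at w)" "norm (LG - LF) < e/2"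
      using g_near(3) unfolding \<eta>_def by auto
    moreover have "norm (LG - L) \<le> e"
      using norm_triangle_ineq[of "LG - LF" "LF - L"] \<open>norm (LG - LF) < e/2\<close> \<open>norm (LF - L) \<le> e/2\<close> by simp
    ultimately show ?thesis using g_near(1) by blast
  qed
  then have "ball (snd c p) (r/2) \<subseteq> snd c ` (fst c \<inter> g -` fst c) \<and>
      (\<forall>w\<in>ball (snd c p) (r/2). dist (local_rep c c g w) (snd c (f p)) < \<delta>) \<and>
      derivative_close_on (ball (snd c p) (r/2)) (local_rep c c g) L e"
    if "g \<in> C1_basic_nbhd A f {(c, c, K)} \<eta>" for g
    using that unfolding derivative_close_on_def by blast
  moreover have "C1_nbhd_data A f {(c, c, K)} \<eta>"
    unfolding K_def \<eta>_def using C1_nbhd_data_chart_cball[OF at \<open>c \<in> A\<close> _ cball] \<open>e > 0\<close> \<open>\<delta> > 0\<close> by simp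
  ultimately show ?thesis using \<open>r > 0\<close> half_gt_zero by blast
qed

lemma local_rep_conjugate_close:
  assumes c: "is_chart (fst c) (snd c)" and d: "is_chart (fst d) (snd d)" and "continuous_on UNIV g"
    and T1_dom: "ball a r1 \<subseteq> snd d ` (fst d \<inter> fst c)"
    and T1_near: "\<forall>z\<in>ball a r1. dist (local_rep d c id z) b < \<rho>"
    and T1_close: "derivative_close_on (ball a r1) (local_rep d c id) T1 e"
    and G_dom: "ball b \<rho> \<subseteq> snd c ` (fst c \<inter> g -` fst c)"
    and G_near: "\<forall>w\<in>ball b \<rho>. dist (local_rep c c g w) b < r2"
    and G_close: "derivative_close_on (ball b \<rho>) (local_rep c c g) F e"
    and T2_dom: "ball b r2 \<subseteq> snd c ` (fst c \<inter> fst d)"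
    and T2_close: "derivative_close_on (ball b r2) (local_rep c d id) T2 e"
    and e: "\<forall>X1 X2 X3. norm (X1 - T2) \<le> e \<longrightarrow> norm (X2 - F) \<le> e \<longrightarrow> norm (X3 - T1) \<le> e \<longrightarrow>
              norm ((X1 o\<^sub>L X2 o\<^sub>L X3) - (T2 o\<^sub>L F o\<^sub>L T1)) < \<kappa>"
  shows "ball a r1 \<subseteq> snd d ` (fst d \<inter> g -` fst d)"
    and "derivative_close_on (ball a r1) (local_rep d d g) (T2 o\<^sub>L F o\<^sub>L T1) \<kappa>"
proof -
  have "z \<in> snd d ` (fst d \<inter> g -` fst d) \<and> (\<exists>L'. (local_rep d d g has_derivative blinfun_apply L') (at z)
          \<and> norm (L' - (T2 o\<^sub>L F o\<^sub>L T1)) \<le> \<kappa>)" if z: "z \<in> ball a r1" for z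
  proof -
    obtain p where p: "p \<in> fst d" "p \<in> fst c" "z = snd d p"
      using z T1_dom by auto
    have w: "snd c p \<in> ball b \<rho>"
      using bspec[OF T1_near z] local_rep_apply[OF d p(1), of c id] p(3) by (simp add: dist_commute)
    then have "g p \<in> fst c"
      using G_dom local_rep_domain_iff[OF c \<open>p \<in> fst c\<close>, of g "fst c"] by blast
    have u: "snd c (g p) \<in> ball b r2"
      using bspec[OF G_near w] local_rep_apply[OF c \<open>p \<in> fst c\<close>] by (simp add: dist_commute)
    then have "g p \<in> fst d"
      using T2_dom local_rep_domain_iff[OF c \<open>g p \<in> fst c\<close>, of id "fst d"] by auto
    obtain L1 where L1: "(local_rep d c id has_derivative blinfun_apply L1) (at z)" "norm (L1 - T1) \<le> e"
      using T1_close z unfolding derivative_close_on_def by blast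
    obtain LG where LG: "(local_rep c c g has_derivative blinfun_apply LG) (at (snd c p))" "norm (LG - F) \<le> e"
      using G_close w unfolding derivative_close_on_def by blast
    obtain L2 where L2: "(local_rep c d id has_derivative blinfun_apply L2) (at (snd c (g p)))"
        "norm (L2 - T2) \<le> e"
      using T2_close u unfolding derivative_close_on_def by blast
    have "(local_rep d d g has_derivative blinfun_apply (L2 o\<^sub>L LG o\<^sub>L L1)) (at z)"
      using local_rep_change_of_chart_has_derivative[OF c d \<open>continuous_on UNIV g\<close>
          \<open>p \<in> fst c\<close> \<open>p \<in> fst d\<close> \<open>g p \<in> fst c\<close> \<open>g p \<in> fst d\<close> _ LG(1) L2(1)] L1(1) p(3) by simp
    moreover have "norm ((L2 o\<^sub>L LG o\<^sub>L L1) - (T2 o\<^sub>L F o\<^sub>L T1)) \<le> \<kappa>"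
      using e L1(2) LG(2) L2(2) by (simp add: less_imp_le)
    ultimately show ?thesis using p \<open>g p \<in> fst d\<close> by blast
  qed
  then show "ball a r1 \<subseteq> snd d ` (fst d \<inter> g -` fst d)"
    and "derivative_close_on (ball a r1) (local_rep d d g) (T2 o\<^sub>L F o\<^sub>L T1) \<kappa>"
    unfolding derivative_close_on_def by blast+
qed

lemma compatible_chart_local_rep_close:
  assumes at: "oriented_C1_atlas A" and chart: "compatible_chart A (U, \<phi>)" and f: "C1_diffeo A f"
    and "c \<in> A" "x \<in> fst c" "x \<in> U" "f x = x"
    and T1: "(local_rep (U, \<phi>) c id has_derivative blinfun_apply T1) (at (\<phi> x))"
    and F': "(local_rep c c f has_derivative blinfun_apply F') (at (snd c x))"
    and T2: "(local_rep c (U, \<phi>) id has_derivative blinfun_apply T2) (at (snd c x))"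
    and "\<kappa> > 0"
  shows "\<exists>r>0. \<exists>F \<eta>. C1_nbhd_data A f F \<eta> \<and> (\<forall>g\<in>C1_basic_nbhd A f F \<eta>.
           ball (\<phi> x) r \<subseteq> \<phi> ` (U \<inter> g -` U) \<and>
           derivative_close_on (ball (\<phi> x) r) (local_rep (U, \<phi>) (U, \<phi>) g) (T2 o\<^sub>L F' o\<^sub>L T1) \<kappa>)"
proof -
  have c: "is_chart (fst c) (snd c)" using at \<open>c \<in> A\<close> atlas_is_chart by blast
  have \<phi>: "is_chart (fst (U, \<phi>)) (snd (U, \<phi>))" using chart unfolding compatible_chart_def by simp
  have O1: "open (\<phi> ` (U \<inter> fst c))" "\<phi> x \<in> \<phi> ` (U \<inter> fst c)" "C1_on (\<phi> ` (U \<inter> fst c)) (local_rep (U, \<phi>) c id)"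
    using open_local_rep_domain[OF \<phi> continuous_on_id chart_open_dom[OF c]] chart \<open>c \<in> A\<close> assms(5,6)
    unfolding compatible_chart_def overlap_dom_def transition_eq_local_rep by auto
  have O2: "open (snd c ` (fst c \<inter> U))" "snd c x \<in> snd c ` (fst c \<inter> U)"
      "C1_on (snd c ` (fst c \<inter> U)) (local_rep c (U, \<phi>) id)"
    using open_local_rep_domain[OF c continuous_on_id chart_open_dom[OF \<phi>]] chart \<open>c \<in> A\<close> assms(5,6)
    unfolding compatible_chart_def overlap_dom_def transition_eq_local_rep by auto
  obtain e where "e > 0" and e: "\<forall>X1 X2 X3. norm (X1 - T2) \<le> e \<longrightarrow> norm (X2 - F') \<le> e \<longrightarrow>
      norm (X3 - T1) \<le> e \<longrightarrow> norm ((X1 o\<^sub>L X2 o\<^sub>L X3) - (T2 o\<^sub>L F' o\<^sub>L T1)) < \<kappa>"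
    using blinfun_compose3_close[OF \<open>\<kappa> > 0\<close>] by blast
  obtain r2 where "r2 > 0" "ball (snd c x) r2 \<subseteq> snd c ` (fst c \<inter> U)"
    and T2_close: "derivative_close_on (ball (snd c x) r2) (local_rep c (U, \<phi>) id) T2 e"
    using C1_on_derivative_close_near[OF O2(3,1,2) T2 \<open>e > 0\<close> \<open>e > 0\<close>] by blast
  obtain \<rho> K \<eta> where "\<rho> > 0" and nbhd: "C1_nbhd_data A f {(c, c, K)} \<eta>"
    and G: "\<forall>g\<in>C1_basic_nbhd A f {(c, c, K)} \<eta>.
           ball (snd c x) \<rho> \<subseteq> snd c ` (fst c \<inter> g -` fst c) \<and>
           (\<forall>w\<in>ball (snd c x) \<rho>. dist (local_rep c c g w) (snd c x) < r2) \<and>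
           derivative_close_on (ball (snd c x) \<rho>) (local_rep c c g) F' e"
    using C1_basic_nbhd_local_rep_close[OF at f \<open>c \<in> A\<close> \<open>x \<in> fst c\<close> _ F' \<open>e > 0\<close> \<open>r2 > 0\<close>]
      \<open>f x = x\<close> \<open>x \<in> fst c\<close> by auto
  obtain r1 where "r1 > 0" "ball (\<phi> x) r1 \<subseteq> \<phi> ` (U \<inter> fst c)"
    and T1_near: "\<forall>z\<in>ball (\<phi> x) r1. dist (local_rep (U, \<phi>) c id z) (snd c x) < \<rho>"
    and T1_close: "derivative_close_on (ball (\<phi> x) r1) (local_rep (U, \<phi>) c id) T1 e"
    using C1_on_derivative_close_near[OF O1(3,1,2) T1 \<open>e > 0\<close> \<open>\<rho> > 0\<close>]
      local_rep_apply[OF \<phi>, of x c id] \<open>x \<in> U\<close> by auto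
  have "ball (\<phi> x) r1 \<subseteq> \<phi> ` (U \<inter> g -` U) \<and>
      derivative_close_on (ball (\<phi> x) r1) (local_rep (U, \<phi>) (U, \<phi>) g) (T2 o\<^sub>L F' o\<^sub>L T1) \<kappa>"
    if "g \<in> C1_basic_nbhd A f {(c, c, K)} \<eta>" for g
  proof -
    have "C1_diffeo A g" using that unfolding C1_basic_nbhd_def by blast
    from bspec[OF G that] show ?thesis
      using local_rep_conjugate_close[OF c \<phi> C1_diffeo_continuous[OF \<open>C1_diffeo A g\<close>] _ T1_near T1_close
          _ _ _ _ T2_close e] \<open>ball (\<phi> x) r1 \<subseteq> _\<close> \<open>ball (snd c x) r2 \<subseteq> _\<close>
      by simp
  qed
  then show ?thesis using \<open>r1 > 0\<close> nbhd by blast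
qed

lemma C1_basic_nbhd_Diff0:
  assumes "f \<in> Diff0 A" "C1_nbhd_data A f F \<eta>"
  shows "C1_nbhd_in_Diff0 A f (C1_basic_nbhd A f F \<eta> \<inter> Diff0 A)" and "f \<in> C1_basic_nbhd A f F \<eta> \<inter> Diff0 A"
proof -
  have "C1_diffeo A f" using assms(1) unfolding Diff0_def by blast
  then show "f \<in> C1_basic_nbhd A f F \<eta> \<inter> Diff0 A"
    using assms unfolding C1_basic_nbhd_def C1_nbhd_data_def by (force simp: onorm_zero)
  show "C1_nbhd_in_Diff0 A f (C1_basic_nbhd A f F \<eta> \<inter> Diff0 A)"
    using assms(2) unfolding C1_nbhd_in_Diff0_def by blast
qed

lemma Diff0_linearization_in_chart:
  assumes at: "oriented_C1_atlas A" and chart: "compatible_chart A (U, \<phi>)" and f: "f \<in> Diff0 A"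
    and "x \<in> U" "f x = x"
  obtains L where "0 < det (matrix (blinfun_apply L))"
    and "\<forall>\<kappa>>0. \<exists>r>0. \<exists>W. C1_nbhd_in_Diff0 A f W \<and> f \<in> W \<and> (\<forall>g\<in>W.
           ball (\<phi> x) r \<subseteq> \<phi> ` (U \<inter> g -` U) \<and>
           derivative_close_on (ball (\<phi> x) r) (local_rep (U, \<phi>) (U, \<phi>) g) L \<kappa>)"
proof -
  have fd: "C1_diffeo A f" using f unfolding Diff0_def by blast
  obtain c where "c \<in> A" "x \<in> fst c" using atlas_covers[OF at] by blast
  have c: "is_chart (fst c) (snd c)" using at \<open>c \<in> A\<close> atlas_is_chart by blast
  have \<phi>: "is_chart (fst (U, \<phi>)) (snd (U, \<phi>))" using chart unfolding compatible_chart_def by simp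
  have "\<phi> x \<in> overlap_dom (U, \<phi>) c" "snd c x \<in> overlap_dom c (U, \<phi>)"
    using \<open>x \<in> U\<close> \<open>x \<in> fst c\<close> unfolding overlap_dom_def by auto
  then obtain T1 T2
    where T1: "(local_rep (U, \<phi>) c id has_derivative blinfun_apply T1) (at (\<phi> x))"
      and T2: "(local_rep c (U, \<phi>) id has_derivative blinfun_apply T2) (at (snd c x))"
    using chart \<open>c \<in> A\<close> C1_on_has_blinfun_derivative
    unfolding compatible_chart_def transition_eq_local_rep by metis
  obtain F' where F': "(local_rep c c f has_derivative blinfun_apply F') (at (snd c x))"
    and "frechet_derivative (local_rep c c f) (at (snd c x)) = blinfun_apply F'"
    using C1_diffeo_local_rep_has_derivative[OF fd \<open>c \<in> A\<close> \<open>c \<in> A\<close> \<open>x \<in> fst c\<close>] \<open>f x = x\<close> \<open>x \<in> fst c\<close>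
    by auto
  then have "0 < det (matrix (blinfun_apply F'))"
    using Diff0_local_jacobian_pos[OF at f \<open>c \<in> A\<close> \<open>c \<in> A\<close> \<open>x \<in> fst c\<close>] \<open>f x = x\<close> \<open>x \<in> fst c\<close>
    unfolding local_jacobian_def by simp
  \<comment> \<open>\<open>(U, \<phi>)\<close> need not be positively oriented, but conjugating by the transitions keeps the determinant\<close>
  have "blinfun_apply T2 \<circ> blinfun_apply T1 = id"
    using local_rep_id_derivatives_inverse[OF c \<phi>] T1 T2 \<open>x \<in> U\<close> \<open>x \<in> fst c\<close> by simp
  then have det_L: "det (matrix (blinfun_apply (T2 o\<^sub>L F' o\<^sub>L T1))) = det (matrix (blinfun_apply F'))"
    by (rule det_matrix_blinfun_conjugate)
  have close: "\<exists>r>0. \<exists>W. C1_nbhd_in_Diff0 A f W \<and> f \<in> W \<and> (\<forall>g\<in>W.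
           ball (\<phi> x) r \<subseteq> \<phi> ` (U \<inter> g -` U) \<and>
           derivative_close_on (ball (\<phi> x) r) (local_rep (U, \<phi>) (U, \<phi>) g) (T2 o\<^sub>L F' o\<^sub>L T1) \<kappa>)"
    if "\<kappa> > 0" for \<kappa>
  proof -
    obtain r F \<eta> where "r > 0" "C1_nbhd_data A f F \<eta>" and W: "\<forall>g\<in>C1_basic_nbhd A f F \<eta>.
           ball (\<phi> x) r \<subseteq> \<phi> ` (U \<inter> g -` U) \<and>
           derivative_close_on (ball (\<phi> x) r) (local_rep (U, \<phi>) (U, \<phi>) g) (T2 o\<^sub>L F' o\<^sub>L T1) \<kappa>"
      using compatible_chart_local_rep_close[OF at chart fd \<open>c \<in> A\<close> \<open>x \<in> fst c\<close> \<open>x \<in> U\<close> \<open>f x = x\<close>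
          T1 F' T2 \<open>\<kappa> > 0\<close>] by blast
    then show ?thesis using \<open>r > 0\<close> C1_basic_nbhd_Diff0[OF f] by blast
  qed
  show thesis
    using that[of "T2 o\<^sub>L F' o\<^sub>L T1"] det_L \<open>0 < det (matrix (blinfun_apply F'))\<close> close by simp
qed

lemma islimpt_Fix_imp_fixed:
  fixes f :: "'a::t2_space \<Rightarrow> 'a"
  assumes "continuous_on UNIV f" "x islimpt Fix f"
  shows "f x = x"
proof -
  have "closed (Fix f)" unfolding Fix_def using assms(1) by (simp add: closed_Collect_eq continuous_on_id)
  then show ?thesis using assms(2) closed_limpt unfolding Fix_def by blast
qed

lemma Fix_islimpt_imp_eigenvalue_one:
  assumes \<phi>: "is_chart U \<phi>" and "x \<in> U" "f x = x" "x islimpt Fix f"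
    and close: "\<And>\<kappa>. \<kappa> > 0 \<Longrightarrow> \<exists>r>0. derivative_close_on (ball (\<phi> x) r) (local_rep (U, \<phi>) (U, \<phi>) f) L \<kappa>"
  shows "det (matrix (\<lambda>w. L w - w)) = 0"
proof (rule ccontr)
  assume "det (matrix (\<lambda>w. L w - w)) \<noteq> 0"
  moreover have lin: "linear (\<lambda>w. L w - w)"
    by (simp add: linear_iff blinfun.add_right blinfun.scaleR_right algebra_simps)
  ultimately have "inj (\<lambda>w. L w - w)" using det_nz_iff_inj by blast
  then obtain c where "c > 0" and below: "\<And>w. c * norm w \<le> norm (L w - w)"
    using linear_inj_bounded_below_pos[OF lin] by blast
  then obtain r where "r > 0" and F_close: "derivative_close_on (ball (\<phi> x) r) (local_rep (U, \<phi>) (U, \<phi>) f) L (c/2)"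
    using close half_gt_zero by blast
  have "open (\<phi> -` ball (\<phi> x) r \<inter> U)"
    using continuous_on_open_vimage[OF chart_open_dom[OF \<phi>], THEN iffD1, OF chart_continuous[OF \<phi>]]
    by (meson open_ball)
  moreover have "x \<in> \<phi> -` ball (\<phi> x) r \<inter> U" using \<open>x \<in> U\<close> \<open>r > 0\<close> by simp
  ultimately obtain y where "y \<in> Fix f" "y \<in> \<phi> -` ball (\<phi> x) r \<inter> U" "y \<noteq> x"
    using \<open>x islimpt Fix f\<close>[unfolded islimpt_def, rule_format] by meson
  then have y: "y \<in> Fix f" "y \<in> U" "\<phi> y \<in> ball (\<phi> x) r" "y \<noteq> x" by auto
  have "local_rep (U, \<phi>) (U, \<phi>) f (\<phi> p) = \<phi> p" if "p \<in> U" "f p = p" for p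
    using local_rep_apply[of "(U, \<phi>)" p] \<phi> that by simp
  then have "\<phi> y = \<phi> x"
    using derivative_close_fixed_points_eq[OF convex_ball F_close below _ _ y(3)] \<open>c > 0\<close> \<open>r > 0\<close>
      \<open>x \<in> U\<close> \<open>f x = x\<close> y(1,2) unfolding Fix_def by simp
  then show False using chart_inj[OF \<phi>] \<open>x \<in> U\<close> y(2,4) by (auto dest: inj_onD)
qed

lemma Diff0_Fix_accumulation_linearization:
  assumes at: "oriented_C1_atlas A" and chart: "compatible_chart A (U, \<phi>)" and f: "f \<in> Diff0 A"
    and "x \<in> U" "f x = x" "x islimpt Fix f"
  obtains L :: "R2 \<Rightarrow>\<^sub>L R2" and c :: real
  where "c > 0" and "\<forall>s\<in>{0..1}. \<forall>w. c * norm w \<le> norm ((1 - s) *\<^sub>R w + s *\<^sub>R L w)"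
    and "\<forall>\<kappa>>0. \<exists>r>0. \<exists>W. C1_nbhd_in_Diff0 A f W \<and> f \<in> W \<and> (\<forall>g\<in>W.
           ball (\<phi> x) r \<subseteq> \<phi> ` (U \<inter> g -` U) \<and>
           derivative_close_on (ball (\<phi> x) r) (local_rep (U, \<phi>) (U, \<phi>) g) L \<kappa>)"
proof -
  have \<phi>: "is_chart U \<phi>" using chart unfolding compatible_chart_def by simp
  obtain L where "0 < det (matrix (blinfun_apply L))"
    and near: "\<forall>\<kappa>>0. \<exists>r>0. \<exists>W. C1_nbhd_in_Diff0 A f W \<and> f \<in> W \<and> (\<forall>g\<in>W.
           ball (\<phi> x) r \<subseteq> \<phi> ` (U \<inter> g -` U) \<and>
           derivative_close_on (ball (\<phi> x) r) (local_rep (U, \<phi>) (U, \<phi>) g) L \<kappa>)"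
    using Diff0_linearization_in_chart[OF at chart f \<open>x \<in> U\<close> \<open>f x = x\<close>] by blast
  moreover have "det (matrix (\<lambda>w. L w - w)) = 0"
    using Fix_islimpt_imp_eigenvalue_one[OF \<phi> \<open>x \<in> U\<close> \<open>f x = x\<close> \<open>x islimpt Fix f\<close>] near by meson
  ultimately obtain c where "c > 0" "\<forall>s\<in>{0..1}. \<forall>w. c * norm w \<le> norm ((1 - s) *\<^sub>R w + s *\<^sub>R L w)"
    using segment_from_id_uniformly_bounded_below by blast
  then show thesis using that near by blast
qed

section \<open>Straight segments in a chart\<close>

lemma chart_ball_segment:
  assumes \<phi>: "is_chart U \<phi>" and "ball (\<phi> x) \<epsilon> \<subseteq> \<phi> ` U"
    and "p \<in> chart_ball (U, \<phi>) x \<epsilon>" "q \<in> chart_ball (U, \<phi>) x \<epsilon>" "0 \<le> t" "t \<le> 1"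
  shows "(1 - t) *\<^sub>R \<phi> p + t *\<^sub>R \<phi> q \<in> ball (\<phi> x) \<epsilon>"
    and "\<phi> (seg_path (U, \<phi>) p q t) = (1 - t) *\<^sub>R \<phi> p + t *\<^sub>R \<phi> q"
    and "seg_path (U, \<phi>) p q t \<in> chart_ball (U, \<phi>) x \<epsilon>"
proof -
  show *: "(1 - t) *\<^sub>R \<phi> p + t *\<^sub>R \<phi> q \<in> ball (\<phi> x) \<epsilon>"
    using assms(3-6) convexD_alt[OF convex_ball] unfolding mem_chart_ball_iff[OF \<phi>] by blast
  then show **: "\<phi> (seg_path (U, \<phi>) p q t) = (1 - t) *\<^sub>R \<phi> p + t *\<^sub>R \<phi> q"
    using assms(2) chart_f_inv[OF \<phi>] unfolding seg_path_def by auto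
  show "seg_path (U, \<phi>) p q t \<in> chart_ball (U, \<phi>) x \<epsilon>"
    using * ** assms(2) chart_inv_in[OF \<phi>] unfolding mem_chart_ball_iff[OF \<phi>] seg_path_def by auto
qed

lemma seg_path_simps:
  assumes "is_chart U \<phi>"
  shows "p \<in> U \<Longrightarrow> seg_path (U, \<phi>) p q 0 = p"
    and "q \<in> U \<Longrightarrow> seg_path (U, \<phi>) p q 1 = q"
    and "p \<in> U \<Longrightarrow> seg_path (U, \<phi>) p p t = p"
  using chart_inv_f[OF assms] by (simp_all add: seg_path_def scaleR_collapse)

lemma continuous_on_seg_path:
  assumes \<phi>: "is_chart U \<phi>" and "\<And>t. t \<in> {0..1} \<Longrightarrow> (1 - t) *\<^sub>R \<phi> p + t *\<^sub>R \<phi> q \<in> \<phi> ` U"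
  shows "continuous_on {0..1} (seg_path (U, \<phi>) p q)"
  unfolding seg_path_def fst_conv snd_conv
  by (rule continuous_on_compose2[OF chart_inv_continuous[OF \<phi>]], intro continuous_intros) (use assms(2) in auto)

lemma straight_homotopy_eq_seg_path:
  "straight_homotopy c \<gamma>0 \<gamma>1 t s = seg_path c (\<gamma>0 s) (\<gamma>1 s) t"
  by (simp add: straight_homotopy_def seg_path_def)

lemma Fix_segment_image_subset_chart_ball:
  assumes \<phi>: "is_chart U \<phi>" and "x \<in> U" "f x = x"
    and dom: "ball (\<phi> x) \<epsilon> \<subseteq> \<phi> ` (U \<inter> f -` U)"
    and close: "derivative_close_on (ball (\<phi> x) \<epsilon>) (local_rep (U, \<phi>) (U, \<phi>) f) L (1/2)"
    and y: "y \<in> Fix f \<inter> chart_ball (U, \<phi>) x \<epsilon>"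
  shows "f ` seg (U, \<phi>) x y \<subseteq> chart_ball (U, \<phi>) x \<epsilon>"
proof
  fix q assume "q \<in> f ` seg (U, \<phi>) x y"
  then obtain t where "0 \<le> t" "t \<le> 1" and q: "q = f (seg_path (U, \<phi>) x y t)"
    unfolding seg_def by auto
  have "\<phi> y \<in> ball (\<phi> x) \<epsilon>" "y \<in> U" "f y = y"
    using y by (auto simp: mem_chart_ball_iff[OF \<phi>] Fix_def)
  then have "\<phi> x \<in> ball (\<phi> x) \<epsilon>" by (meson centre_in_ball le_less_trans mem_ball zero_le_dist)
  have F_fix: "local_rep (U, \<phi>) (U, \<phi>) f (\<phi> z) = \<phi> z" if "z \<in> U" "f z = z" for z
    using local_rep_apply[of "(U, \<phi>)" z] \<phi> that by simp
  define z where "z = (1 - t) *\<^sub>R \<phi> x + t *\<^sub>R \<phi> y"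
  have "z \<in> ball (\<phi> x) \<epsilon>"
    unfolding z_def by (rule convexD_alt[OF convex_ball]) fact+
  then have "f (inv_into U \<phi> z) \<in> U"
    using dom local_rep_domain_inv(2)[of "(U, \<phi>)" z f U] \<phi> by auto
  have "norm (local_rep (U, \<phi>) (U, \<phi>) f z - \<phi> x) \<le> norm (\<phi> y - \<phi> x)"
    unfolding z_def
    by (rule segment_image_norm_le[OF convex_ball close \<open>\<phi> x \<in> ball (\<phi> x) \<epsilon>\<close> \<open>\<phi> y \<in> ball (\<phi> x) \<epsilon>\<close>
          F_fix[OF \<open>x \<in> U\<close> \<open>f x = x\<close>] F_fix[OF \<open>y \<in> U\<close> \<open>f y = y\<close>] \<open>0 \<le> t\<close> \<open>t \<le> 1\<close>])
  also have "\<dots> < \<epsilon>" using \<open>\<phi> y \<in> ball (\<phi> x) \<epsilon>\<close> by (simp add: dist_norm norm_minus_commute)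
  finally have "\<phi> (f (inv_into U \<phi> z)) \<in> ball (\<phi> x) \<epsilon>"
    by (simp add: local_rep_def dist_norm norm_minus_commute)
  then show "q \<in> chart_ball (U, \<phi>) x \<epsilon>"
    using \<open>f (inv_into U \<phi> z) \<in> U\<close> unfolding q seg_path_def mem_chart_ball_iff[OF \<phi>] by (simp add: z_def)
qed

lemma segment_to_image_disjoint_Fix:
  assumes \<phi>: "is_chart U \<phi>" and dom: "ball (\<phi> x) \<epsilon> \<subseteq> \<phi> ` U"
    and close: "derivative_close_on (ball (\<phi> x) \<epsilon>) (local_rep (U, \<phi>) (U, \<phi>) g) L \<delta>"
    and below: "\<forall>s\<in>{0..1}. \<forall>w. c * norm w \<le> norm ((1 - s) *\<^sub>R w + s *\<^sub>R L w)" and "\<delta> < c"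
    and p: "p \<notin> Fix g" "p \<in> chart_ball (U, \<phi>) x \<epsilon>" "g p \<in> chart_ball (U, \<phi>) x \<epsilon>"
  shows "seg (U, \<phi>) p (g p) \<inter> Fix g = {}"
proof (rule equals0I)
  fix q assume "q \<in> seg (U, \<phi>) p (g p) \<inter> Fix g"
  then obtain s where s: "0 \<le> s" "s \<le> 1" and q: "q = seg_path (U, \<phi>) p (g p) s" and "g q = q"
    unfolding seg_def Fix_def by auto
  define G where "G = local_rep (U, \<phi>) (U, \<phi>) g"
  define Q where "Q = (1 - s) *\<^sub>R \<phi> p + s *\<^sub>R \<phi> (g p)"
  have "Q \<in> ball (\<phi> x) \<epsilon>" "\<phi> q = Q" "q \<in> U"
    using chart_ball_segment[OF \<phi> dom p(2,3) s] unfolding Q_def q mem_chart_ball_iff[OF \<phi>] by auto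
  have "p \<in> U" "\<phi> p \<in> ball (\<phi> x) \<epsilon>" "g p \<in> U"
    using p(2,3) unfolding mem_chart_ball_iff[OF \<phi>] by auto
  have G_apply: "G (\<phi> z) = \<phi> (g z)" if "z \<in> U" for z
    unfolding G_def using local_rep_apply[of "(U, \<phi>)" z] \<phi> that by simp
  have "G Q = Q"
    using G_apply[OF \<open>q \<in> U\<close>] \<open>g q = q\<close> \<open>\<phi> q = Q\<close> by simp
  then have "G (\<phi> p) = \<phi> p"
    using fixed_point_on_segment_to_image[OF convex_ball close[folded G_def] _ \<open>\<delta> < c\<close> s
        \<open>\<phi> p \<in> ball (\<phi> x) \<epsilon>\<close> \<open>Q \<in> ball (\<phi> x) \<epsilon>\<close>] below s G_apply[OF \<open>p \<in> U\<close>]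
    unfolding Q_def by simp
  then have "g p = p"
    using G_apply[OF \<open>p \<in> U\<close>] chart_inj[OF \<phi>] \<open>p \<in> U\<close> \<open>g p \<in> U\<close> by (auto dest: inj_onD)
  then show False using p(1) unfolding Fix_def by simp
qed

lemma continuous_on_straight_homotopy:
  assumes \<phi>: "is_chart U \<phi>" and dom: "ball (\<phi> x) \<epsilon> \<subseteq> \<phi> ` U"
    and "continuous_on {0..1} \<gamma>0" "continuous_on {0..1} \<gamma>1"
    and \<gamma>: "\<gamma>0 ` {0..1} \<subseteq> chart_ball (U, \<phi>) x \<epsilon>" "\<gamma>1 ` {0..1} \<subseteq> chart_ball (U, \<phi>) x \<epsilon>"
  shows "continuous_on ({0..1} \<times> {0..1}) (\<lambda>(t, s). straight_homotopy (U, \<phi>) \<gamma>0 \<gamma>1 t s)"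
proof -
  have "\<gamma>0 ` {0..1} \<subseteq> U" "\<gamma>1 ` {0..1} \<subseteq> U"
    using \<gamma> by (auto simp: mem_chart_ball_iff[OF \<phi>])
  have snd: "continuous_on ({0..1} \<times> {0..1}) (snd :: real \<times> real \<Rightarrow> real)"
    "snd ` ({0..1} \<times> {0..1}) \<subseteq> {0..1::real}"
    by (auto intro: continuous_on_snd continuous_on_id)
  have "continuous_on ({0..1} \<times> {0..1}) (\<lambda>u::real \<times> real. \<phi> (\<gamma>0 (snd u)))"
    using continuous_on_compose2[OF continuous_on_compose2[OF chart_continuous[OF \<phi>]] snd]
      assms(3) \<open>\<gamma>0 ` {0..1} \<subseteq> U\<close> by simp
  moreover have "continuous_on ({0..1} \<times> {0..1}) (\<lambda>u::real \<times> real. \<phi> (\<gamma>1 (snd u)))"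
    using continuous_on_compose2[OF continuous_on_compose2[OF chart_continuous[OF \<phi>]] snd]
      assms(4) \<open>\<gamma>1 ` {0..1} \<subseteq> U\<close> by simp
  ultimately have "continuous_on ({0..1} \<times> {0..1})
      (\<lambda>u::real \<times> real. (1 - fst u) *\<^sub>R \<phi> (\<gamma>0 (snd u)) + fst u *\<^sub>R \<phi> (\<gamma>1 (snd u)))"
    by (intro continuous_intros)
  moreover have "(\<lambda>u::real \<times> real. (1 - fst u) *\<^sub>R \<phi> (\<gamma>0 (snd u)) + fst u *\<^sub>R \<phi> (\<gamma>1 (snd u)))
      ` ({0..1} \<times> {0..1}) \<subseteq> \<phi> ` U"
  proof
    fix v assume "v \<in> (\<lambda>u. (1 - fst u) *\<^sub>R \<phi> (\<gamma>0 (snd u)) + fst u *\<^sub>R \<phi> (\<gamma>1 (snd u))) ` ({0..1} \<times> {0..1})"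
    then obtain t s where "0 \<le> t" "t \<le> 1" "s \<in> {0..1}" and v: "v = (1 - t) *\<^sub>R \<phi> (\<gamma>0 s) + t *\<^sub>R \<phi> (\<gamma>1 s)"
      by auto
    then show "v \<in> \<phi> ` U"
      using chart_ball_segment(1)[OF \<phi> dom _ _ \<open>0 \<le> t\<close> \<open>t \<le> 1\<close>] \<gamma> dom by blast
  qed
  ultimately show ?thesis
    unfolding straight_homotopy_def case_prod_beta fst_conv snd_conv
    by (rule continuous_on_compose2[OF chart_inv_continuous[OF \<phi>]])
qed

lemma seg_path_to_image_Fix_const:
  assumes \<phi>: "is_chart U \<phi>" and "p \<in> U" "t0 \<in> {0..1}" "seg_path (U, \<phi>) p (f p) t0 \<in> Fix f"
    and disjoint: "p \<notin> Fix f \<Longrightarrow> seg (U, \<phi>) p (f p) \<inter> Fix f = {}"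
  shows "seg_path (U, \<phi>) p (f p) t = seg_path (U, \<phi>) p (f p) t0"
proof (cases "f p = p")
  case True
  then show ?thesis using seg_path_simps(3)[OF \<phi> \<open>p \<in> U\<close>] by simp
next
  case False
  then have "seg (U, \<phi>) p (f p) \<inter> Fix f = {}" using disjoint unfolding Fix_def by simp
  then show ?thesis using assms(3,4) unfolding seg_def by blast
qed

lemma straight_homotopy_rel_Fix:
  assumes \<phi>: "is_chart U \<phi>" and "continuous_on UNIV f" and "x \<in> U" "f x = x"
    and dom: "ball (\<phi> x) \<epsilon> \<subseteq> \<phi> ` U"
    and y: "y \<in> Fix f \<inter> chart_ball (U, \<phi>) x \<epsilon>"
    and image: "f ` seg (U, \<phi>) x y \<subseteq> chart_ball (U, \<phi>) x \<epsilon>"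
    and disjoint: "\<And>p. p \<notin> Fix f \<Longrightarrow> p \<in> chart_ball (U, \<phi>) x \<epsilon> \<Longrightarrow> f p \<in> chart_ball (U, \<phi>) x \<epsilon>
                     \<Longrightarrow> seg (U, \<phi>) p (f p) \<inter> Fix f = {}"
  shows "homotopy_rel (Fix f) (seg_path (U, \<phi>) x y) (f \<circ> seg_path (U, \<phi>) x y)
           (straight_homotopy (U, \<phi>) (seg_path (U, \<phi>) x y) (f \<circ> seg_path (U, \<phi>) x y))"
proof -
  define \<gamma> where "\<gamma> = seg_path (U, \<phi>) x y"
  define H where "H = straight_homotopy (U, \<phi>) \<gamma> (f \<circ> \<gamma>)"
  have "y \<in> U" "f y = y" "y \<in> chart_ball (U, \<phi>) x \<epsilon>" "x \<in> chart_ball (U, \<phi>) x \<epsilon>"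
    using y \<open>x \<in> U\<close> by (auto simp: mem_chart_ball_iff[OF \<phi>] Fix_def) (meson le_less_trans zero_le_dist)
  have \<gamma>: "\<gamma> s \<in> chart_ball (U, \<phi>) x \<epsilon>" "f (\<gamma> s) \<in> chart_ball (U, \<phi>) x \<epsilon>" if "s \<in> {0..1}" for s
    using chart_ball_segment(3)[OF \<phi> dom \<open>x \<in> chart_ball (U, \<phi>) x \<epsilon>\<close> \<open>y \<in> chart_ball (U, \<phi>) x \<epsilon>\<close>]
      image that unfolding \<gamma>_def seg_def by auto
  then have \<gamma>_U: "\<gamma> s \<in> U" "f (\<gamma> s) \<in> U" if "s \<in> {0..1}" for s
    using that unfolding mem_chart_ball_iff[OF \<phi>] by auto
  have H_seg: "H t s = seg_path (U, \<phi>) (\<gamma> s) (f (\<gamma> s)) t" for t s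
    unfolding H_def straight_homotopy_eq_seg_path by simp
  have "continuous_on {0..1} \<gamma>"
    unfolding \<gamma>_def using chart_ball_segment(1)[OF \<phi> dom \<open>x \<in> chart_ball (U, \<phi>) x \<epsilon>\<close>
        \<open>y \<in> chart_ball (U, \<phi>) x \<epsilon>\<close>] dom
    by (intro continuous_on_seg_path[OF \<phi>]) auto
  moreover have "continuous_on {0..1} (f \<circ> \<gamma>)"
    using continuous_on_compose calculation continuous_on_subset[OF \<open>continuous_on UNIV f\<close>] by blast
  ultimately have "continuous_on ({0..1} \<times> {0..1}) (\<lambda>(t, s). H t s)"
    unfolding H_def using \<gamma> by (intro continuous_on_straight_homotopy[OF \<phi> dom]) auto
  moreover have "H 0 s = \<gamma> s \<and> H 1 s = (f \<circ> \<gamma>) s" if "s \<in> {0..1}" for s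
    using \<gamma>_U[OF that] seg_path_simps(1,2)[OF \<phi>] unfolding H_seg by simp
  moreover have "H t 0 = \<gamma> 0 \<and> H t 1 = \<gamma> 1" for t
    using seg_path_simps[OF \<phi>] \<open>x \<in> U\<close> \<open>y \<in> U\<close> \<open>f x = x\<close> \<open>f y = y\<close>
    unfolding H_seg \<gamma>_def by simp
  moreover have "H t s = H t0 s"
    if "t0 \<in> {0..1}" "s \<in> {0..1}" "H t0 s \<in> Fix f" for t0 s t
    using seg_path_to_image_Fix_const[OF \<phi> \<gamma>_U(1) that(1)] that(2,3) disjoint \<gamma> unfolding H_seg by blast
  ultimately show ?thesis
    unfolding homotopy_rel_def H_def[symmetric] \<gamma>_def[symmetric] by blast
qed

lemma near_linear_chart_ball_segments:
  assumes \<phi>: "is_chart U \<phi>" and "continuous_on UNIV f" "x \<in> U" "f x = x"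
    and "C1_nbhd_in_Diff0 A f W" "f \<in> W"
    and W: "\<forall>g\<in>W. ball (\<phi> x) r \<subseteq> \<phi> ` (U \<inter> g -` U) \<and>
              derivative_close_on (ball (\<phi> x) r) (local_rep (U, \<phi>) (U, \<phi>) g) L \<delta>"
    and below: "\<forall>s\<in>{0..1}. \<forall>w. c * norm w \<le> norm ((1 - s) *\<^sub>R w + s *\<^sub>R L w)" and "\<delta> < c" "\<delta> \<le> 1/2"
  shows "\<forall>\<epsilon>. 0 < \<epsilon> \<and> \<epsilon> < r \<longrightarrow>
     (\<forall>y \<in> Fix f \<inter> chart_ball (U, \<phi>) x \<epsilon>. f ` seg (U, \<phi>) x y \<subseteq> chart_ball (U, \<phi>) x \<epsilon>) \<and>
     (\<exists>W. C1_nbhd_in_Diff0 A f W \<and>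
        (\<forall>g\<in>W. \<forall>p. p \<notin> Fix g \<and> p \<in> chart_ball (U, \<phi>) x \<epsilon> \<and> g p \<in> chart_ball (U, \<phi>) x \<epsilon>
           \<longrightarrow> seg (U, \<phi>) p (g p) \<inter> Fix g = {})) \<and>
     (\<forall>y \<in> Fix f \<inter> chart_ball (U, \<phi>) x \<epsilon>.
        homotopy_rel (Fix f) (seg_path (U, \<phi>) x y) (f \<circ> seg_path (U, \<phi>) x y)
          (straight_homotopy (U, \<phi>) (seg_path (U, \<phi>) x y) (f \<circ> seg_path (U, \<phi>) x y)))"
proof (intro allI impI)
  fix \<epsilon> assume "0 < \<epsilon> \<and> \<epsilon> < r"
  then have "ball (\<phi> x) \<epsilon> \<subseteq> ball (\<phi> x) r" by (intro subset_ball) simp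
  then have dom_f: "ball (\<phi> x) \<epsilon> \<subseteq> \<phi> ` (U \<inter> f -` U)" and dom: "ball (\<phi> x) \<epsilon> \<subseteq> \<phi> ` U"
    using W \<open>f \<in> W\<close> by blast+
  have close: "derivative_close_on (ball (\<phi> x) \<epsilon>) (local_rep (U, \<phi>) (U, \<phi>) g) L \<delta>" if "g \<in> W" for g
    using W that derivative_close_on_mono[OF _ \<open>ball (\<phi> x) \<epsilon> \<subseteq> ball (\<phi> x) r\<close> order_refl] by blast
  have image: "f ` seg (U, \<phi>) x y \<subseteq> chart_ball (U, \<phi>) x \<epsilon>" if "y \<in> Fix f \<inter> chart_ball (U, \<phi>) x \<epsilon>" for y
    using Fix_segment_image_subset_chart_ball[OF \<phi> \<open>x \<in> U\<close> \<open>f x = x\<close> dom_f _ that]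
      derivative_close_on_mono[OF close[OF \<open>f \<in> W\<close>] subset_refl \<open>\<delta> \<le> 1/2\<close>] by blast
  have disjoint: "seg (U, \<phi>) p (g p) \<inter> Fix g = {}"
    if "g \<in> W" "p \<notin> Fix g" "p \<in> chart_ball (U, \<phi>) x \<epsilon>" "g p \<in> chart_ball (U, \<phi>) x \<epsilon>" for g p
    using segment_to_image_disjoint_Fix[OF \<phi> dom close[OF that(1)] below \<open>\<delta> < c\<close> that(2-4)] .
  have "homotopy_rel (Fix f) (seg_path (U, \<phi>) x y) (f \<circ> seg_path (U, \<phi>) x y)
      (straight_homotopy (U, \<phi>) (seg_path (U, \<phi>) x y) (f \<circ> seg_path (U, \<phi>) x y))"
    if "y \<in> Fix f \<inter> chart_ball (U, \<phi>) x \<epsilon>" for y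
    using straight_homotopy_rel_Fix[OF \<phi> \<open>continuous_on UNIV f\<close> \<open>x \<in> U\<close> \<open>f x = x\<close> dom that image[OF that]
        disjoint[OF \<open>f \<in> W\<close>]] .
  then show "(\<forall>y \<in> Fix f \<inter> chart_ball (U, \<phi>) x \<epsilon>. f ` seg (U, \<phi>) x y \<subseteq> chart_ball (U, \<phi>) x \<epsilon>) \<and>
     (\<exists>W. C1_nbhd_in_Diff0 A f W \<and>
        (\<forall>g\<in>W. \<forall>p. p \<notin> Fix g \<and> p \<in> chart_ball (U, \<phi>) x \<epsilon> \<and> g p \<in> chart_ball (U, \<phi>) x \<epsilon>
           \<longrightarrow> seg (U, \<phi>) p (g p) \<inter> Fix g = {})) \<and>
     (\<forall>y \<in> Fix f \<inter> chart_ball (U, \<phi>) x \<epsilon>.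
        homotopy_rel (Fix f) (seg_path (U, \<phi>) x y) (f \<circ> seg_path (U, \<phi>) x y)
          (straight_homotopy (U, \<phi>) (seg_path (U, \<phi>) x y) (f \<circ> seg_path (U, \<phi>) x y)))"
    using image disjoint \<open>C1_nbhd_in_Diff0 A f W\<close> by blast
qed

theorem lemma3p7:
  fixes A :: "'a::t2_space chartT set" and g0 :: nat and f :: "'a \<Rightarrow> 'a" and x :: 'a
    and U :: "'a set" and \<phi> :: "'a \<Rightarrow> R2"
  assumes surf: "closed_oriented_surface_genus A g0" and genus: "g0 \<ge> 2"
    and f: "f \<in> Diff0 A"
    and acc: "x islimpt Fix f"
    and chart: "compatible_chart A (U, \<phi>)" and xU: "x \<in> U"
  shows "\<exists>\<epsilon>0>0. \<forall>\<epsilon>. 0 < \<epsilon> \<and> \<epsilon> < \<epsilon>0 \<longrightarrow>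
     (\<forall>y \<in> Fix f \<inter> chart_ball (U, \<phi>) x \<epsilon>. f ` seg (U, \<phi>) x y \<subseteq> chart_ball (U, \<phi>) x \<epsilon>) \<and>
     (\<exists>W. C1_nbhd_in_Diff0 A f W \<and>
        (\<forall>g\<in>W. \<forall>p. p \<notin> Fix g \<and> p \<in> chart_ball (U, \<phi>) x \<epsilon> \<and> g p \<in> chart_ball (U, \<phi>) x \<epsilon>
           \<longrightarrow> seg (U, \<phi>) p (g p) \<inter> Fix g = {})) \<and>
     (\<forall>y \<in> Fix f \<inter> chart_ball (U, \<phi>) x \<epsilon>.
        homotopy_rel (Fix f) (seg_path (U, \<phi>) x y) (f \<circ> seg_path (U, \<phi>) x y)
          (straight_homotopy (U, \<phi>) (seg_path (U, \<phi>) x y) (f \<circ> seg_path (U, \<phi>) x y)))"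
proof -
  \<comment> \<open>The statement is local: of the surface hypotheses only the oriented atlas is used, not the genus.\<close>
  have at: "oriented_C1_atlas A" using surf unfolding closed_oriented_surface_genus_def by blast
  have \<phi>: "is_chart U \<phi>" using chart unfolding compatible_chart_def by simp
  have "C1_diffeo A f" using f unfolding Diff0_def by blast
  then have "continuous_on UNIV f" by (rule C1_diffeo_continuous)
  then have "f x = x" using acc by (rule islimpt_Fix_imp_fixed)
  obtain L :: "R2 \<Rightarrow>\<^sub>L R2" and c where "c > 0"
    and below: "\<forall>s\<in>{0..1}. \<forall>w. c * norm w \<le> norm ((1 - s) *\<^sub>R w + s *\<^sub>R L w)"
    and near: "\<forall>\<kappa>>0. \<exists>r>0. \<exists>W. C1_nbhd_in_Diff0 A f W \<and> f \<in> W \<and> (\<forall>g\<in>W.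
           ball (\<phi> x) r \<subseteq> \<phi> ` (U \<inter> g -` U) \<and>
           derivative_close_on (ball (\<phi> x) r) (local_rep (U, \<phi>) (U, \<phi>) g) L \<kappa>)"
    by (rule Diff0_Fix_accumulation_linearization[OF at chart f xU \<open>f x = x\<close> acc])
  have \<kappa>: "min (1/2) (c/2) > 0" "min (1/2) (c/2) < c" "min (1/2) (c/2) \<le> 1/2" using \<open>c > 0\<close> by auto
  then obtain r W where "r > 0" "C1_nbhd_in_Diff0 A f W" "f \<in> W" and W: "\<forall>g\<in>W.
      ball (\<phi> x) r \<subseteq> \<phi> ` (U \<inter> g -` U) \<and>
      derivative_close_on (ball (\<phi> x) r) (local_rep (U, \<phi>) (U, \<phi>) g) L (min (1/2) (c/2))"
    using near[rule_format, OF \<kappa>(1)] by blast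
  show ?thesis
    using near_linear_chart_ball_segments[OF \<phi> \<open>continuous_on UNIV f\<close> xU \<open>f x = x\<close>
        \<open>C1_nbhd_in_Diff0 A f W\<close> \<open>f \<in> W\<close> W below \<kappa>(2,3)] \<open>r > 0\<close> by (intro exI[of _ r]) simp
qed

end
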